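(* Let $n,l\ge 1$, $\sigma_x>0$, $\sigma_\eta>0$, $\hat{\mu}\ge 0$. Let $x_{i,1},x_{i,2},\ldots\in\mathbb{R}^n$ and $\eta_{i,1},\eta_{i,2},\ldots\in\mathbb{R}^l$ be mutually independent Gaussian random vectors with $x_{i,j}\sim\mathcal{N}(\mu_{i,j},\sigma_x^2I_n)$ and $\eta_{i,j}\sim\mathcal{N}(0,\sigma_\eta^2 I_l)$, where the means $\mu_{i,j}\in\mathbb{R}^n$ are deterministic with $\|\mu_{i,j}\|\le\hat{\mu}$ for all $j$. Fix $\delta>0$ and let $t\ge t_3=2(n+l)\log\frac{1}{\delta}$. Then with probability at least $1-2\delta$, $$\Big\|\sum_{j=1}^t\eta_{i,j}x_{i,j}^*\Big\|\le\sqrt{t}\,\sigma_\eta\left(4\sigma_x\sqrt{(n+l)\log\tfrac{9}{\delta}}+\hat{\mu}\Big(\sqrt{2(l+n)}+\sqrt{2\log\tfrac{2}{\delta}}\Big)\right).$$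
   Context: $\|\cdot\|$ denotes the spectral norm and $A^*$ the (conjugate) transpose. $\mathcal{N}(\mu,\sigma^2 I)$ is the Gaussian distribution with mean $\mu$ and covariance $\sigma^2 I$. *)

theory Defs
  imports "HOL-Probability.Probability"
begin

definition iso_gauss_density :: "('n::finite) itself \<Rightarrow> real ^ 'n \<Rightarrow> real \<Rightarrow> real ^ 'n \<Rightarrow> real" where
  "iso_gauss_density _ mu s x =
     (1 / sqrt (2 * pi * s\<^sup>2)) ^ CARD('n) * exp (- (norm (x - mu))\<^sup>2 / (2 * s\<^sup>2))"

definition outer :: "real ^ 'l \<Rightarrow> real ^ 'n \<Rightarrow> real ^ 'n ^ 'l" where
  "outer e v = (\<chi> a b. e $ a * v $ b)"

definition spec_norm :: "real ^ 'n ^ 'l \<Rightarrow> real" where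
  "spec_norm A = onorm (\<lambda>v. A *v v)"

end

theory Submission
  imports Defs
begin

text \<open>Write the sum as \<open>S\<^sub>0 + S\<^sub>\<mu>\<close> with \<open>S\<^sub>0 = \<Sum> \<eta>\<^sub>j (x\<^sub>j - \<mu>\<^sub>j)\<^sup>*\<close> and
  \<open>S\<^sub>\<mu> = \<Sum> \<eta>\<^sub>j \<mu>\<^sub>j\<^sup>*\<close>. For fixed unit vectors \<open>u, v\<close>, \<open>u\<^sup>* S\<^sub>0 v\<close> is a sum of \<open>t\<close>
  independent products of independent centred Gaussians, each with moment generating function
  \<open>1 / sqrt (1 - \<lambda>\<^sup>2 \<sigma>\<^sub>x\<^sup>2 \<sigma>\<^sub>\<eta>\<^sup>2)\<close>. The norm of \<open>S\<^sub>0\<close> is at most twice the maximum of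
  \<open>u\<^sup>* S\<^sub>0 v\<close> over \<open>1/4\<close>-nets of the two unit spheres, which have at most \<open>9\<^sup>l\<close> and \<open>9\<^sup>n\<close>
  points, so a Chernoff bound with a suitable \<open>\<lambda>\<close> and a union bound give the first term of the
  bound except with probability \<open>1.9 \<delta>\<close>. The columns of \<open>S\<^sub>\<mu>\<close> are centred Gaussian vectors
  in \<open>\<real>\<^sup>l\<close>; bounding the spectral norm by the Frobenius norm, a chi-square type Chernoff
  bound gives the second term except with probability \<open>\<delta>/10\<close>.\<close>

section \<open>Gaussian integrals\<close>

lemma iso_gauss_density_nonneg: "0 \<le> iso_gauss_density TYPE('n::finite) m s x"
  by (simp add: iso_gauss_density_def)

lemma borel_measurable_iso_gauss_density[measurable]:
  "iso_gauss_density TYPE('n::finite) m s \<in> borel_measurable borel"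
  unfolding iso_gauss_density_def[abs_def] by measurable

lemma nn_integral_iso_gauss_density_shift:
  fixes h :: "real ^ 'n::finite \<Rightarrow> ennreal"
  assumes [measurable]: "h \<in> borel_measurable borel"
  shows "(\<integral>\<^sup>+a. ennreal (iso_gauss_density TYPE('n) m s a) * h (a - m) \<partial>lborel)
       = (\<integral>\<^sup>+a. ennreal (iso_gauss_density TYPE('n) 0 s a) * h a \<partial>lborel)"
proof -
  have "(\<integral>\<^sup>+a. ennreal (iso_gauss_density TYPE('n) m s a) * h (a - m) \<partial>lborel)
     = (\<integral>\<^sup>+a. ennreal (iso_gauss_density TYPE('n) m s a) * h (a - m) \<partial>(distr lborel borel ((+) m)))"
    by (simp add: lborel_distr_plus)
  also have "\<dots> = (\<integral>\<^sup>+a. ennreal (iso_gauss_density TYPE('n) m s (m + a)) * h (m + a - m) \<partial>lborel)"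
    by (subst nn_integral_distr) auto
  also have "\<dots> = (\<integral>\<^sup>+a. ennreal (iso_gauss_density TYPE('n) 0 s a) * h a \<partial>lborel)"
    by (simp add: iso_gauss_density_def)
  finally show ?thesis .
qed

lemma nn_integral_iso_gauss_density_scale:
  assumes s: "s > 0" and s': "s' > 0"
  shows "(\<integral>\<^sup>+x. ennreal (iso_gauss_density TYPE('n::finite) 0 s' x) \<partial>lborel)
       = (\<integral>\<^sup>+x. ennreal (iso_gauss_density TYPE('n) 0 s x) \<partial>lborel)"
proof -
  define c where "c = s' / s"
  have c: "c > 0" using s s' by (simp add: c_def)
  have density_scale: "c ^ CARD('n) * iso_gauss_density TYPE('n) 0 s' (c *\<^sub>R x)
      = iso_gauss_density TYPE('n) 0 s x" for x :: "real ^ 'n"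
  proof -
    have factor: "c * (1 / sqrt (2 * pi * s'\<^sup>2)) = 1 / sqrt (2 * pi * s\<^sup>2)"
      using s s' by (simp add: c_def real_sqrt_mult)
    have exponent: "- (norm (c *\<^sub>R x))\<^sup>2 / (2 * s'\<^sup>2) = - (norm x)\<^sup>2 / (2 * s\<^sup>2)"
      using s s' c by (simp add: c_def power_mult_distrib field_simps)
    show ?thesis
      unfolding iso_gauss_density_def diff_zero mult.assoc[symmetric] power_mult_distrib[symmetric]
      by (simp only: factor exponent)
  qed
  have "(\<integral>\<^sup>+x. ennreal (iso_gauss_density TYPE('n) 0 s' x) \<partial>lborel)
     = (\<integral>\<^sup>+x. ennreal (iso_gauss_density TYPE('n) 0 s' x)
          \<partial>density (distr lborel borel (\<lambda>x. 0 + c *\<^sub>R x)) (\<lambda>_. \<bar>c\<bar> ^ DIM(real ^ 'n)))"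
    using lborel_affine[of c "0::real^'n"] c by simp
  also have "\<dots> = (\<integral>\<^sup>+x. ennreal (c ^ CARD('n)) * ennreal (iso_gauss_density TYPE('n) 0 s' (c *\<^sub>R x)) \<partial>lborel)"
    using c by (subst nn_integral_density) (auto simp: nn_integral_distr)
  also have "\<dots> = (\<integral>\<^sup>+x. ennreal (iso_gauss_density TYPE('n) 0 s x) \<partial>lborel)"
    using c by (intro nn_integral_cong)
      (simp add: density_scale ennreal_mult'[symmetric] iso_gauss_density_nonneg)
  finally show ?thesis .
qed

text \<open>The normalisation of \<open>iso_gauss_density\<close> is never computed: it is transported by
  translation and scaling from a single instance, which a distributed random vector supplies.\<close>

lemma nn_integral_iso_gauss_density_eq_1:
  assumes "s0 > 0" and "s > 0"
    and "(\<integral>\<^sup>+x. ennreal (iso_gauss_density TYPE('n::finite) m0 s0 x) \<partial>lborel) = 1"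
  shows "(\<integral>\<^sup>+x. ennreal (iso_gauss_density TYPE('n) m s x) \<partial>lborel) = 1"
  using assms nn_integral_iso_gauss_density_shift[of "\<lambda>_. 1" m s]
    nn_integral_iso_gauss_density_shift[of "\<lambda>_. 1" m0 s0]
    nn_integral_iso_gauss_density_scale[of s0 s, where 'n='n]
  by simp

lemma (in prob_space) distributed_nn_integral_density_eq_1:
  assumes "distributed M lborel X (\<lambda>v. ennreal (f v))"
  shows "(\<integral>\<^sup>+v. ennreal (f v) \<partial>lborel) = 1"
proof -
  have "emeasure M (X -` UNIV \<inter> space M) = (\<integral>\<^sup>+x. ennreal (f x) * indicator UNIV x \<partial>lborel)"
    using distributed_emeasure[OF assms, of UNIV] by simp
  then show ?thesis using emeasure_space_1 by simp
qed

lemma gauss_exponent_complete_square: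
  fixes x m w :: "real ^ 'n::finite"
  assumes s: "s > 0"
  shows "- (norm (x - m))\<^sup>2 / (2 * s\<^sup>2) + inner w x
       = inner w m + s\<^sup>2 * (norm w)\<^sup>2 / 2 - (norm (x - (m + s\<^sup>2 *\<^sub>R w)))\<^sup>2 / (2 * s\<^sup>2)"
proof -
  define d where "d = x - m"
  have x: "x = m + d" by (simp add: d_def)
  have "(norm (x - (m + s\<^sup>2 *\<^sub>R w)))\<^sup>2 = (norm d)\<^sup>2 - 2 * s\<^sup>2 * inner w d + s\<^sup>2 * s\<^sup>2 * (norm w)\<^sup>2"
    unfolding x
    by (simp add: power2_norm_eq_inner inner_diff_left inner_diff_right inner_commute algebra_simps)
  note expand = this
  show ?thesis
    unfolding expand using s by (simp add: x inner_add_right field_simps power2_eq_square)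
qed

lemma nn_integral_iso_gauss_exp_inner:
  assumes s: "s > 0"
    and one: "\<And>m. (\<integral>\<^sup>+x. ennreal (iso_gauss_density TYPE('n::finite) m s x) \<partial>lborel) = 1"
  shows "(\<integral>\<^sup>+x. ennreal (iso_gauss_density TYPE('n) m s x) * ennreal (exp (inner w x)) \<partial>lborel)
       = ennreal (exp (inner w m + s\<^sup>2 * (norm w)\<^sup>2 / 2))"
proof -
  have tilt: "ennreal (iso_gauss_density TYPE('n) m s x) * ennreal (exp (inner w x))
      = ennreal (exp (inner w m + s\<^sup>2 * (norm w)\<^sup>2 / 2))
        * ennreal (iso_gauss_density TYPE('n) (m + s\<^sup>2 *\<^sub>R w) s x)" for x
  proof -
    have "iso_gauss_density TYPE('n) m s x * exp (inner w x)
      = exp (inner w m + s\<^sup>2 * (norm w)\<^sup>2 / 2) * iso_gauss_density TYPE('n) (m + s\<^sup>2 *\<^sub>R w) s x"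
      unfolding iso_gauss_density_def
      using gauss_exponent_complete_square[OF s, of x m w]
      by (simp add: mult.assoc mult.left_commute exp_add[symmetric])
    then show ?thesis by (simp add: ennreal_mult'[symmetric] iso_gauss_density_nonneg)
  qed
  have "(\<integral>\<^sup>+x. ennreal (iso_gauss_density TYPE('n) m s x) * ennreal (exp (inner w x)) \<partial>lborel)
     = ennreal (exp (inner w m + s\<^sup>2 * (norm w)\<^sup>2 / 2))
       * (\<integral>\<^sup>+x. ennreal (iso_gauss_density TYPE('n) (m + s\<^sup>2 *\<^sub>R w) s x) \<partial>lborel)"
    unfolding tilt by (rule nn_integral_cmult) measurable
  then show ?thesis using one by simp
qed

lemma nn_integral_iso_gauss_exp_norm_sq:
  assumes s: "s > 0" and g: "2 * g * s\<^sup>2 < 1"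
    and one: "(\<integral>\<^sup>+x. ennreal (iso_gauss_density TYPE('n::finite) 0 s x) \<partial>lborel) = 1"
  shows "(\<integral>\<^sup>+x. ennreal (iso_gauss_density TYPE('n) 0 s x) * ennreal (exp (g * (norm x)\<^sup>2)) \<partial>lborel)
       = ennreal ((1 / sqrt (1 - 2 * g * s\<^sup>2)) ^ CARD('n))"
proof -
  define q where "q = sqrt (1 - 2 * g * s\<^sup>2)"
  have q: "q > 0" using g by (simp add: q_def)
  have q2: "q\<^sup>2 = 1 - 2 * g * s\<^sup>2" using g by (simp add: q_def)
  define s' where "s' = s / q"
  have s': "s' > 0" using s q by (simp add: s'_def)
  have tilt: "ennreal (iso_gauss_density TYPE('n) 0 s x) * ennreal (exp (g * (norm x)\<^sup>2))
      = ennreal ((1 / q) ^ CARD('n)) * ennreal (iso_gauss_density TYPE('n) 0 s' x)" for x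
  proof -
    have "- (norm x)\<^sup>2 / (2 * s'\<^sup>2) = - (norm x)\<^sup>2 * q\<^sup>2 / (2 * s\<^sup>2)"
      using s q by (simp add: s'_def field_simps)
    also have "\<dots> = - (norm x)\<^sup>2 / (2 * s\<^sup>2) + g * (norm x)\<^sup>2"
      unfolding q2 using s by (simp add: field_simps)
    finally have exponent: "- (norm x)\<^sup>2 / (2 * s\<^sup>2) + g * (norm x)\<^sup>2 = - (norm x)\<^sup>2 / (2 * s'\<^sup>2)"
      by simp
    have factor: "1 / sqrt (2 * pi * s\<^sup>2) = (1/q) * (1 / sqrt (2 * pi * s'\<^sup>2))"
      using s q by (simp add: s'_def real_sqrt_mult real_sqrt_divide field_simps)
    have "iso_gauss_density TYPE('n) 0 s x * exp (g * (norm x)\<^sup>2)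
       = (1 / q) ^ CARD('n) * iso_gauss_density TYPE('n) 0 s' x"
      unfolding iso_gauss_density_def factor power_mult_distrib
      using exponent by (simp add: exp_add[symmetric] mult.assoc)
    then show ?thesis using q by (simp add: ennreal_mult'[symmetric] iso_gauss_density_nonneg)
  qed
  have "(\<integral>\<^sup>+x. ennreal (iso_gauss_density TYPE('n) 0 s x) * ennreal (exp (g * (norm x)\<^sup>2)) \<partial>lborel)
      = ennreal ((1 / q) ^ CARD('n)) * (\<integral>\<^sup>+x. ennreal (iso_gauss_density TYPE('n) 0 s' x) \<partial>lborel)"
    unfolding tilt by (rule nn_integral_cmult) measurable
  also have "(\<integral>\<^sup>+x. ennreal (iso_gauss_density TYPE('n) 0 s' x) \<partial>lborel) = 1"
    using nn_integral_iso_gauss_density_eq_1[OF s s' one] .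
  finally show ?thesis by (simp add: q_def)
qed

lemma nn_integral_normal_density_eq_1: "s > 0 \<Longrightarrow> (\<integral>\<^sup>+x. ennreal (normal_density m s x) \<partial>lborel) = 1"
proof -
  assume "s > 0"
  interpret prob_space "density lborel (\<lambda>x. ennreal (normal_density m s x))"
    using \<open>s > 0\<close> by (rule prob_space_normal_density)
  show ?thesis using emeasure_space_1 by (simp add: emeasure_density)
qed

lemma nn_integral_std_normal_exp_linear:
  "(\<integral>\<^sup>+x. ennreal (std_normal_density x) * ennreal (exp (b * x)) \<partial>lborel) = ennreal (exp (b\<^sup>2 / 2))"
proof -
  have tilt: "ennreal (std_normal_density x) * ennreal (exp (b * x))
      = ennreal (exp (b\<^sup>2 / 2)) * ennreal (normal_density b 1 x)" for x
  proof -
    have "std_normal_density x * exp (b * x) = exp (b\<^sup>2 / 2) * normal_density b 1 x"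
      unfolding normal_density_def
      by (simp add: exp_add[symmetric] mult.assoc mult.left_commute power2_eq_square field_simps)
    then show ?thesis by (simp add: ennreal_mult'[symmetric])
  qed
  have "(\<integral>\<^sup>+x. ennreal (std_normal_density x) * ennreal (exp (b * x)) \<partial>lborel)
      = ennreal (exp (b\<^sup>2 / 2)) * (\<integral>\<^sup>+x. ennreal (normal_density b 1 x) \<partial>lborel)"
    unfolding tilt by (rule nn_integral_cmult) measurable
  then show ?thesis by (simp add: nn_integral_normal_density_eq_1)
qed

lemma nn_integral_std_normal_exp_square:
  assumes g: "2 * g < 1"
  shows "(\<integral>\<^sup>+x. ennreal (std_normal_density x) * ennreal (exp (g * x\<^sup>2)) \<partial>lborel)
       = ennreal (1 / sqrt (1 - 2 * g))"
proof -
  define q where "q = sqrt (1 - 2 * g)"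
  have q: "q > 0" using g by (simp add: q_def)
  have q2: "q\<^sup>2 = 1 - 2 * g" using g by (simp add: q_def)
  have tilt: "ennreal (std_normal_density x) * ennreal (exp (g * x\<^sup>2))
      = ennreal (1 / q) * ennreal (normal_density 0 (1/q) x)" for x
  proof -
    have "- x\<^sup>2 / (2 * (1/q)\<^sup>2) = - x\<^sup>2 * q\<^sup>2 / 2" using q by (simp add: field_simps)
    also have "\<dots> = - x\<^sup>2 / 2 + g * x\<^sup>2" unfolding q2 by (simp add: field_simps)
    finally have exponent: "- x\<^sup>2 / 2 + g * x\<^sup>2 = - x\<^sup>2 / (2 * (1/q)\<^sup>2)" by simp
    have "std_normal_density x * exp (g * x\<^sup>2) = (1 / q) * normal_density 0 (1/q) x"
      unfolding normal_density_def using q exponent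
      by (simp add: exp_add[symmetric] real_sqrt_mult real_sqrt_divide field_simps)
    then show ?thesis using q by (simp add: ennreal_mult'[symmetric])
  qed
  have "(\<integral>\<^sup>+x. ennreal (std_normal_density x) * ennreal (exp (g * x\<^sup>2)) \<partial>lborel)
      = ennreal (1 / q) * (\<integral>\<^sup>+x. ennreal (normal_density 0 (1/q) x) \<partial>lborel)"
    unfolding tilt by (rule nn_integral_cmult) measurable
  then show ?thesis using q by (simp add: nn_integral_normal_density_eq_1 q_def)
qed

text \<open>The square is linearised by an auxiliary standard normal \<open>r\<close>:
  \<open>exp (k y\<^sup>2) = E exp (\<surd>(2k) y r)\<close>; after Fubini the inner integral is a linear exponential
  moment of the isotropic Gaussian.\<close>

lemma nn_integral_iso_gauss_exp_inner_square:
  fixes u :: "real ^ 'l::finite"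
  assumes s: "s > 0" and u: "norm u = 1" and k: "k \<ge> 0" and k2: "2 * k * s\<^sup>2 < 1"
    and one: "\<And>m. (\<integral>\<^sup>+x. ennreal (iso_gauss_density TYPE('l) m s x) \<partial>lborel) = 1"
  shows "(\<integral>\<^sup>+e. ennreal (iso_gauss_density TYPE('l) 0 s e) * ennreal (exp (k * (inner u e)\<^sup>2)) \<partial>lborel)
       = ennreal (1 / sqrt (1 - 2 * k * s\<^sup>2))"
proof -
  define b where "b = sqrt (2 * k)"
  have b2: "b\<^sup>2 = 2 * k" using k by (simp add: b_def)
  have "(\<integral>\<^sup>+e. ennreal (iso_gauss_density TYPE('l) 0 s e) * ennreal (exp (k * (inner u e)\<^sup>2)) \<partial>lborel)
      = (\<integral>\<^sup>+e. ennreal (iso_gauss_density TYPE('l) 0 s e) *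
            (\<integral>\<^sup>+r. ennreal (std_normal_density r) * ennreal (exp ((b * inner u e) * r)) \<partial>lborel) \<partial>lborel)"
  proof (rule nn_integral_cong)
    fix e :: "real^'l"
    have "exp (k * (inner u e)\<^sup>2) = exp ((b * inner u e)\<^sup>2 / 2)"
      by (simp add: power_mult_distrib b2)
    then show "ennreal (iso_gauss_density TYPE('l) 0 s e) * ennreal (exp (k * (inner u e)\<^sup>2)) =
      ennreal (iso_gauss_density TYPE('l) 0 s e) *
            (\<integral>\<^sup>+r. ennreal (std_normal_density r) * ennreal (exp ((b * inner u e) * r)) \<partial>lborel)"
      by (simp only: nn_integral_std_normal_exp_linear)
  qed
  also have "\<dots> = (\<integral>\<^sup>+e. (\<integral>\<^sup>+r. ennreal (iso_gauss_density TYPE('l) 0 s e)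
      * (ennreal (std_normal_density r) * ennreal (exp ((b * inner u e) * r))) \<partial>lborel) \<partial>lborel)"
    by (subst nn_integral_cmult[symmetric]) (auto intro!: nn_integral_cong)
  also have "\<dots> = (\<integral>\<^sup>+r. (\<integral>\<^sup>+e. ennreal (iso_gauss_density TYPE('l) 0 s e)
      * (ennreal (std_normal_density r) * ennreal (exp ((b * inner u e) * r))) \<partial>lborel) \<partial>lborel)"
    by (rule lborel_pair.Fubini'[symmetric]) measurable
  also have "\<dots> = (\<integral>\<^sup>+r. ennreal (std_normal_density r) * (\<integral>\<^sup>+e. ennreal (iso_gauss_density TYPE('l) 0 s e)
      * ennreal (exp (inner ((b * r) *\<^sub>R u) e)) \<partial>lborel) \<partial>lborel)"
    by (subst nn_integral_cmult[symmetric]) (auto intro!: nn_integral_cong simp: ac_simps)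
  also have "\<dots> = (\<integral>\<^sup>+r. ennreal (std_normal_density r) * ennreal (exp ((k * s\<^sup>2) * r\<^sup>2)) \<partial>lborel)"
  proof (rule nn_integral_cong)
    fix r :: real
    have exponent: "s\<^sup>2 * (norm ((b * r) *\<^sub>R u))\<^sup>2 / 2 = (k * s\<^sup>2) * r\<^sup>2"
      using u by (simp add: power_mult_distrib b2)
    show "ennreal (std_normal_density r) * (\<integral>\<^sup>+e. ennreal (iso_gauss_density TYPE('l) 0 s e)
        * ennreal (exp (inner ((b * r) *\<^sub>R u) e)) \<partial>lborel)
      = ennreal (std_normal_density r) * ennreal (exp ((k * s\<^sup>2) * r\<^sup>2))"
      using nn_integral_iso_gauss_exp_inner[OF s one, of 0 "(b * r) *\<^sub>R u"]
      unfolding inner_zero_right add_0_left exponent by simp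
  qed
  also have "\<dots> = ennreal (1 / sqrt (1 - 2 * (k * s\<^sup>2)))"
    by (rule nn_integral_std_normal_exp_square) (use k2 in simp)
  finally show ?thesis by (simp add: mult.assoc)
qed

section \<open>Spectral norm, outer products and nets\<close>

lemma norm_matrix_vector_mult_le:
  fixes A :: "real ^ 'n::finite ^ 'l::finite"
  shows "norm (A *v x) \<le> norm A * norm x"
proof -
  have "(norm (A *v x))\<^sup>2 = (\<Sum>i\<in>UNIV. (inner (A $ i) x)\<^sup>2)"
    unfolding power2_norm_eq_inner inner_vec_def[of "A *v x"]
    by (simp add: matrix_vector_mult_def inner_vec_def power2_eq_square)
  also have "\<dots> \<le> (\<Sum>i\<in>UNIV. (norm (A $ i))\<^sup>2 * (norm x)\<^sup>2)"
  proof (rule sum_mono)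
    fix i
    have "\<bar>inner (A $ i) x\<bar> \<le> norm (A $ i) * norm x" by (rule Cauchy_Schwarz_ineq2)
    then have "(inner (A $ i) x)\<^sup>2 \<le> (norm (A $ i) * norm x)\<^sup>2"
      by (metis abs_ge_zero power2_abs power_mono)
    then show "(inner (A $ i) x)\<^sup>2 \<le> (norm (A $ i))\<^sup>2 * (norm x)\<^sup>2" by (simp add: power_mult_distrib)
  qed
  also have "\<dots> = (norm A * norm x)\<^sup>2"
  proof -
    have "(norm A)\<^sup>2 = (\<Sum>i\<in>UNIV. (norm (A $ i))\<^sup>2)"
      unfolding power2_norm_eq_inner inner_vec_def[of A] by simp
    then show ?thesis by (simp add: power_mult_distrib sum_distrib_right)
  qed
  finally show ?thesis by (rule power2_le_imp_le) simp
qed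

lemma spec_norm_le_norm: "spec_norm (A :: real ^ 'n::finite ^ 'l::finite) \<le> norm A"
  unfolding spec_norm_def by (rule onorm_le) (rule norm_matrix_vector_mult_le)

lemma spec_norm_triangle:
  "spec_norm ((A :: real ^ 'n::finite ^ 'l::finite) + B) \<le> spec_norm A + spec_norm B"
proof -
  have "(\<lambda>v. (A + B) *v v) = (\<lambda>v. A *v v + B *v v)"
    by (simp add: fun_eq_iff matrix_vector_mult_add_rdistrib)
  then have "spec_norm (A + B) = onorm (\<lambda>v. A *v v + B *v v)"
    unfolding spec_norm_def by simp
  also have "\<dots> \<le> onorm (\<lambda>v. A *v v) + onorm (\<lambda>v. B *v v)"
    by (rule onorm_triangle) auto
  finally show ?thesis unfolding spec_norm_def .
qed

lemma spec_norm_lipschitz: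
  "\<bar>spec_norm (A :: real ^ 'n::finite ^ 'l::finite) - spec_norm B\<bar> \<le> norm (A - B)"
proof -
  have "spec_norm A \<le> spec_norm B + spec_norm (A - B)"
    using spec_norm_triangle[of B "A - B"] by simp
  moreover have "spec_norm B \<le> spec_norm A + spec_norm (B - A)"
    using spec_norm_triangle[of A "B - A"] by simp
  moreover have "spec_norm (B - A) \<le> norm (A - B)"
    using spec_norm_le_norm[of "B - A"] by (simp add: norm_minus_commute)
  ultimately show ?thesis using spec_norm_le_norm[of "A - B"] by linarith
qed

lemma borel_measurable_spec_norm[measurable]:
  "(spec_norm :: real ^ 'n::finite ^ 'l::finite \<Rightarrow> real) \<in> borel_measurable borel"
proof (rule borel_measurable_continuous_onI, rule lipschitz_on_continuous_on)
  show "1-lipschitz_on UNIV (spec_norm :: real ^ 'n::finite ^ 'l::finite \<Rightarrow> real)"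
    by (rule lipschitz_onI) (auto simp: dist_real_def dist_norm spec_norm_lipschitz)
qed

lemma borel_measurable_outer[measurable]:
  fixes f :: "'a \<Rightarrow> real ^ 'l::finite" and g :: "'a \<Rightarrow> real ^ 'n::finite"
  assumes [measurable]: "f \<in> borel_measurable M" "g \<in> borel_measurable M"
  shows "(\<lambda>\<omega>. outer (f \<omega>) (g \<omega>)) \<in> borel_measurable M"
proof -
  have "continuous_on UNIV (\<lambda>p::(real ^ 'l) \<times> (real ^ 'n). outer (fst p) (snd p))"
  proof (rule continuous_at_imp_continuous_on, rule ballI)
    fix p :: "(real ^ 'l) \<times> (real ^ 'n)"
    show "isCont (\<lambda>p::(real ^ 'l) \<times> (real ^ 'n). outer (fst p) (snd p)) p"
      unfolding outer_def isCont_def by (intro tendsto_intros)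
  qed
  then have outer: "(\<lambda>p::(real ^ 'l) \<times> (real ^ 'n). outer (fst p) (snd p)) \<in> borel_measurable (borel \<Otimes>\<^sub>M borel)"
    using borel_measurable_continuous_onI by (simp add: borel_prod)
  have "(\<lambda>\<omega>. (f \<omega>, g \<omega>)) \<in> measurable M (borel \<Otimes>\<^sub>M borel)" by measurable
  from measurable_compose[OF this outer] show ?thesis by simp
qed

lemma outer_add_right: "outer e (a + b) = outer e a + outer e b"
  by (simp add: outer_def vec_eq_iff algebra_simps)

lemma inner_outer_mult: "inner u (outer e z *v v) = inner u e * inner z v"
  by (simp add: outer_def matrix_vector_mult_def inner_vec_def sum_distrib_left sum_distrib_right ac_simps)
    (rule sum.swap)

lemma sum_matrix_vector_mult: "finite J \<Longrightarrow> (\<Sum>j\<in>J. B j) *v v = (\<Sum>j\<in>J. B j *v v)"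
  by (induction J rule: finite_induct) (simp_all add: matrix_vector_mult_add_rdistrib)

lemma power2_norm_vec: "(norm (v :: 'a::real_inner ^ 'n::finite))\<^sup>2 = (\<Sum>i\<in>UNIV. (norm (v $ i))\<^sup>2)"
  unfolding power2_norm_eq_inner inner_vec_def by simp

lemma power2_norm_sum_outer:
  fixes e :: "nat \<Rightarrow> real ^ 'l::finite" and m :: "nat \<Rightarrow> real ^ 'n::finite"
  shows "(norm (\<Sum>j\<in>J. outer (e j) (m j)))\<^sup>2 = (\<Sum>b\<in>UNIV. (norm (\<Sum>j\<in>J. (m j $ b) *\<^sub>R e j))\<^sup>2)"
proof -
  have "(norm (\<Sum>j\<in>J. outer (e j) (m j)))\<^sup>2 = (\<Sum>a\<in>UNIV. \<Sum>b\<in>UNIV. ((\<Sum>j\<in>J. outer (e j) (m j)) $ a $ b)\<^sup>2)"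
    by (simp add: power2_norm_vec)
  also have "\<dots> = (\<Sum>b\<in>UNIV. \<Sum>a\<in>UNIV. ((\<Sum>j\<in>J. (m j $ b) *\<^sub>R e j) $ a)\<^sup>2)"
    by (subst sum.swap) (simp add: outer_def sum_component ac_simps)
  also have "\<dots> = (\<Sum>b\<in>UNIV. (norm (\<Sum>j\<in>J. (m j $ b) *\<^sub>R e j))\<^sup>2)"
    by (simp add: power2_norm_vec)
  finally show ?thesis .
qed

lemma spec_norm_le_if_inner_le:
  fixes A :: "real ^ 'n::finite ^ 'l::finite"
  assumes le: "\<And>u v. norm u = 1 \<Longrightarrow> norm v = 1 \<Longrightarrow> inner u (A *v v) \<le> c"
  shows "spec_norm A \<le> c"
proof -
  obtain i :: 'l and k :: 'n where True by simp
  have "inner (axis i 1) (A *v axis k 1) \<le> c" and "inner (- axis i 1) (A *v axis k 1) \<le> c"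
    by (rule le; simp)+
  then have c: "0 \<le> c" by simp
  have unit: "norm (A *v v) \<le> c" if v: "norm v = 1" for v
  proof (cases "A *v v = 0")
    case False
    define u where "u = (1 / norm (A *v v)) *\<^sub>R (A *v v)"
    have "inner u (A *v v) = norm (A *v v)"
      using False by (simp add: u_def power2_norm_eq_inner[symmetric] power2_eq_square)
    then show ?thesis using le[OF _ v, of u] False by (simp add: u_def)
  qed (use c in simp)
  show ?thesis unfolding spec_norm_def
  proof (rule onorm_le)
    fix x :: "real ^ 'n"
    show "norm (A *v x) \<le> c * norm x"
    proof (cases "x = 0")
      case False
      have "A *v x = norm x *\<^sub>R (A *v ((1 / norm x) *\<^sub>R x))"
        using False by (simp add: matrix_vector_mult_scaleR)
      then show ?thesis using unit[of "(1 / norm x) *\<^sub>R x"] False by (simp add: mult.commute)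
    qed simp
  qed
qed

lemma disjoint_family_on_cball_half:
  fixes S :: "'a::metric_space set"
  assumes sep: "\<And>a b. a \<in> S \<Longrightarrow> b \<in> S \<Longrightarrow> a \<noteq> b \<Longrightarrow> dist a b > e"
  shows "disjoint_family_on (\<lambda>a. cball a (e/2)) S"
  unfolding disjoint_family_on_def
proof (intro ballI impI)
  fix a b assume ab: "a \<in> S" "b \<in> S" "a \<noteq> b"
  show "cball a (e/2) \<inter> cball b (e/2) = {}"
  proof (rule ccontr)
    assume "cball a (e/2) \<inter> cball b (e/2) \<noteq> {}"
    then obtain y where "dist a y \<le> e/2" "dist b y \<le> e/2" by auto
    then have "dist a b \<le> e" using dist_triangle2[of a b y] by simp
    then show False using sep[OF ab] by simp
  qed
qed

lemma card_sphere_packing_le: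
  fixes S :: "(real ^ 'n::finite) set"
  assumes e: "e > 0" and fin: "finite S" and sphere: "\<And>a. a \<in> S \<Longrightarrow> norm a = 1"
    and sep: "\<And>a b. a \<in> S \<Longrightarrow> b \<in> S \<Longrightarrow> a \<noteq> b \<Longrightarrow> dist a b > e"
  shows "real (card S) \<le> (1 + 2 / e) ^ CARD('n)"
proof -
  let ?V = "unit_ball_vol (real CARD('n))"
  have V: "?V > 0" by simp
  have disj: "disjoint_family_on (\<lambda>a. cball a (e/2)) S"
    using sep by (rule disjoint_family_on_cball_half)
  have cover: "(\<Union>a\<in>S. cball a (e/2)) \<subseteq> cball 0 (1 + e/2)"
  proof
    fix y assume "y \<in> (\<Union>a\<in>S. cball a (e/2))"
    then obtain a where a: "a \<in> S" "dist a y \<le> e/2" by auto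
    have "norm y \<le> norm a + norm (y - a)" using norm_triangle_ineq[of a "y - a"] by simp
    also have "\<dots> \<le> 1 + e/2" using sphere[OF a(1)] a(2) by (simp add: dist_norm norm_minus_commute)
    finally show "y \<in> cball 0 (1 + e/2)" by simp
  qed
  have "ennreal (real (card S) * (?V * (e/2) ^ CARD('n))) = (\<Sum>a\<in>S. emeasure lborel (cball a (e/2)))"
    using e by (simp add: emeasure_cball ennreal_of_nat_eq_real_of_nat ennreal_mult'')
  also have "\<dots> = emeasure lborel (\<Union>a\<in>S. cball a (e/2))"
    by (rule sum_emeasure[OF _ disj fin]) auto
  also have "\<dots> \<le> emeasure lborel (cball (0::real^'n) (1 + e/2))"
    by (rule emeasure_mono[OF cover]) auto
  also have "\<dots> = ennreal (?V * (1 + e/2) ^ CARD('n))"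
    using e by (simp add: emeasure_cball)
  finally have "real (card S) * (?V * (e/2) ^ CARD('n)) \<le> ?V * (1 + e/2) ^ CARD('n)"
    using e V ennreal_le_iff by (metis less_imp_le mult_nonneg_nonneg zero_le_power add_nonneg_nonneg
      zero_le_one half_gt_zero)
  then have "?V * (real (card S) * (e/2) ^ CARD('n)) \<le> ?V * (1 + e/2) ^ CARD('n)"
    by (simp only: mult.left_commute)
  then have "real (card S) * (e/2) ^ CARD('n) \<le> (1 + e/2) ^ CARD('n)"
    using V by (simp only: mult_le_cancel_left_pos)
  moreover have "0 < (e/2) ^ CARD('n)" using e by simp
  ultimately have "real (card S) \<le> (1 + e/2) ^ CARD('n) / (e/2) ^ CARD('n)"
    by (simp only: pos_le_divide_eq)
  also have "\<dots> = ((1 + e/2) / (e/2)) ^ CARD('n)"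
    by (simp only: power_divide)
  also have "(1 + e/2) / (e/2) = 1 + 2 / e"
    using e by (simp add: field_simps)
  finally show ?thesis .
qed

text \<open>A maximal \<open>e\<close>-separated subset of the sphere is an \<open>e\<close>-net.\<close>

lemma sphere_net_exists:
  assumes e: "e > 0"
  obtains N :: "(real ^ 'n::finite) set"
  where "N \<subseteq> {v. norm v = 1}" "finite N" "real (card N) \<le> (1 + 2/e) ^ CARD('n)"
    "\<And>v. norm v = 1 \<Longrightarrow> \<exists>w\<in>N. norm (v - w) \<le> e"
proof -
  define P where "P S \<longleftrightarrow> S \<subseteq> {v::real^'n. norm v = 1} \<and> finite S
    \<and> (\<forall>a\<in>S. \<forall>b\<in>S. a \<noteq> b \<longrightarrow> dist a b > e)" for S
  have bounded: "card S < nat (ceiling ((1 + 2/e) ^ CARD('n))) + 1" if "P S" for S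
  proof -
    have "real (card S) \<le> (1 + 2/e) ^ CARD('n)"
      using that unfolding P_def by (intro card_sphere_packing_le[OF e]) auto
    then show ?thesis by linarith
  qed
  have "P {}" by (simp add: P_def)
  from ex_has_greatest_nat[of P "{}" card, OF this] bounded
  obtain N where N: "P N" and max: "\<And>S. P S \<Longrightarrow> card S \<le> card N" by blast
  have "\<exists>w\<in>N. norm (v - w) \<le> e" if v: "norm v = 1" for v
  proof (rule ccontr)
    assume far: "\<not> (\<exists>w\<in>N. norm (v - w) \<le> e)"
    then have "v \<notin> N" using e by force
    moreover have "P (insert v N)" using N v far unfolding P_def
      by (auto simp: dist_norm norm_minus_commute not_le)
    ultimately show False using max[of "insert v N"] N by (simp add: P_def)
  qed
  then show ?thesis
    using that N card_sphere_packing_le[OF e, of N] unfolding P_def by auto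
qed

lemma spec_norm_le_net:
  fixes A :: "real ^ 'n::finite ^ 'l::finite"
  assumes Nl: "\<And>u. norm u = 1 \<Longrightarrow> \<exists>w\<in>Nl. norm (u - w) \<le> 1/4" "\<And>w. w \<in> Nl \<Longrightarrow> norm w = 1"
    and Nn: "\<And>v. norm v = 1 \<Longrightarrow> \<exists>w\<in>Nn. norm (v - w) \<le> 1/4"
    and m: "\<And>u v. u \<in> Nl \<Longrightarrow> v \<in> Nn \<Longrightarrow> inner u (A *v v) \<le> m"
  shows "spec_norm A \<le> 2 * m"
proof -
  define S where "S = spec_norm A"
  have bl: "bounded_linear (\<lambda>v. A *v v)" by simp
  have onA: "\<And>y. norm (A *v y) \<le> S * norm y"
    unfolding S_def spec_norm_def by (rule onorm[OF bl])
  have S0: "S \<ge> 0" unfolding S_def spec_norm_def by (rule onorm_pos_le[OF bl])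
  have "inner u (A *v v) \<le> m + S/2" if u: "norm u = 1" and v: "norm v = 1" for u v
  proof -
    obtain u0 where u0: "u0 \<in> Nl" "norm (u - u0) \<le> 1/4" using Nl(1)[OF u] by blast
    obtain v0 where v0: "v0 \<in> Nn" "norm (v - v0) \<le> 1/4" using Nn[OF v] by blast
    have "inner (u - u0) (A *v v) \<le> norm (u - u0) * norm (A *v v)" by (rule norm_cauchy_schwarz)
    also have "\<dots> \<le> 1/4 * S"
      using onA[of v] v u0(2) S0 by (intro mult_mono) auto
    finally have first: "inner (u - u0) (A *v v) \<le> S / 4" by simp
    have "inner u0 (A *v (v - v0)) \<le> norm u0 * norm (A *v (v - v0))" by (rule norm_cauchy_schwarz)
    also have "\<dots> \<le> S * norm (v - v0)" using Nl(2)[OF u0(1)] onA[of "v - v0"] by simp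
    also have "\<dots> \<le> S * (1/4)" using v0(2) S0 by (intro mult_left_mono) auto
    finally have second: "inner u0 (A *v (v - v0)) \<le> S / 4" by simp
    have "inner u (A *v v) = inner u0 (A *v v0) + inner (u - u0) (A *v v) + inner u0 (A *v (v - v0))"
      by (simp add: inner_diff_left inner_diff_right matrix_vector_mult_diff_distrib)
    then show ?thesis using first second m[OF u0(1) v0(1)] by simp
  qed
  then have "S \<le> m + S/2" unfolding S_def by (rule spec_norm_le_if_inner_le)
  then show ?thesis unfolding S_def by simp
qed

section \<open>Numerical estimates\<close>

lemma ln_le_if_le_exp: "0 < x \<Longrightarrow> x \<le> exp y \<Longrightarrow> ln x \<le> (y::real)"
  using ln_le_cancel_iff[of x "exp y"] by simp

lemma power_Taylor_quadratic_le_exp: "0 \<le> y \<Longrightarrow> (1 + y + y\<^sup>2/2) ^ k \<le> exp (real k * y)"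
  unfolding exp_of_nat_mult by (intro power_mono exp_lower_Taylor_quadratic) auto

lemma ln_9_le: "ln (9::real) \<le> 9/4"
proof (rule ln_le_if_le_exp)
  have "(1 + 9/32 + (9/32)\<^sup>2/2) ^ 8 \<le> exp (real 8 * (9/32::real))"
    by (rule power_Taylor_quadratic_le_exp) simp
  moreover have "(9::real) \<le> (1 + 9/32 + (9/32)\<^sup>2/2) ^ 8" by (simp add: power2_eq_square eval_nat_numeral)
  ultimately show "9 \<le> exp (9/4::real)" by simp
qed simp

lemma ln_25_9_le: "ln (25/9::real) \<le> 11/10"
proof (rule ln_le_if_le_exp)
  have "(1 + 11/20 + (11/20)\<^sup>2/2) ^ 2 \<le> exp (real 2 * (11/20::real))"
    by (rule power_Taylor_quadratic_le_exp) simp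
  moreover have "(25/9::real) \<le> (1 + 11/20 + (11/20)\<^sup>2/2) ^ 2" by (simp add: power2_eq_square eval_nat_numeral)
  ultimately show "25/9 \<le> exp (11/10::real)" by simp
qed simp

lemma quadratic_nonpos_between:
  fixes a b c x x0 x1 :: real
  assumes a: "a \<ge> 0" and x: "x0 \<le> x" "x \<le> x1"
    and f0: "a * x0\<^sup>2 + b * x0 + c \<le> 0" and f1: "a * x1\<^sup>2 + b * x1 + c \<le> 0"
  shows "a * x\<^sup>2 + b * x + c \<le> 0"
proof (cases "x0 = x1")
  case True then show ?thesis using x f0 by simp
next
  case False
  then have d: "x1 - x0 > 0" using x by simp
  have "(x1 - x0) * (a * x\<^sup>2 + b * x + c) = (x1 - x) * (a * x0\<^sup>2 + b * x0 + c)
      + (x - x0) * (a * x1\<^sup>2 + b * x1 + c) + a * (x1 - x0) * ((x - x0) * (x - x1))"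
    by (simp add: power2_eq_square algebra_simps)
  also have "\<dots> \<le> 0"
  proof -
    have "(x1 - x) * (a * x0\<^sup>2 + b * x0 + c) \<le> 0" using x f0 by (intro mult_nonneg_nonpos) auto
    moreover have "(x - x0) * (a * x1\<^sup>2 + b * x1 + c) \<le> 0" using x f1 by (intro mult_nonneg_nonpos) auto
    moreover have "a * (x1 - x0) * ((x - x0) * (x - x1)) \<le> 0"
      using a d x by (intro mult_nonneg_nonpos mult_nonneg_nonneg mult_nonneg_nonpos) auto
    ultimately show ?thesis by linarith
  qed
  finally show ?thesis using d by (simp add: mult_le_0_iff)
qed

text \<open>The logarithm of the union bound \<open>9\<^sup>k exp (- 2 p sqrt (X k A)) (1 - p\<^sup>2)\<^sup>-\<^sup>X\<^sup>/\<^sup>2\<close>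
  over the product of two nets, where \<open>p = \<lambda> \<sigma>\<^sub>x \<sigma>\<^sub>\<eta>\<close> and \<open>A = ln (9/\<delta>)\<close>.\<close>

definition net_chernoff_exponent :: "real \<Rightarrow> real \<Rightarrow> real \<Rightarrow> real \<Rightarrow> real" where
  "net_chernoff_exponent k X A p = k * ln 9 - 2 * p * sqrt (X * (k * A)) + X / 2 * ln (1 / (1 - p\<^sup>2))"

lemma exp_net_chernoff_exponent:
  fixes K t :: nat
  assumes "0 \<le> p" "p < 1"
  shows "exp (net_chernoff_exponent (real K) (real t) A p)
       = 9 ^ K * exp (- (2 * p * sqrt (real t * real K * A))) * (1 / sqrt (1 - p\<^sup>2)) ^ t"
proof -
  have "p\<^sup>2 < 1" using assms by (simp add: abs_square_less_1)
  then have w: "0 < 1 / sqrt (1 - p\<^sup>2)" by simp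
  have "real t / 2 * ln (1 / (1 - p\<^sup>2)) = real t * ln (1 / sqrt (1 - p\<^sup>2))"
    using \<open>p\<^sup>2 < 1\<close> by (simp add: ln_div ln_sqrt)
  then have "exp (real t / 2 * ln (1 / (1 - p\<^sup>2))) = exp (ln (1 / sqrt (1 - p\<^sup>2))) ^ t"
    by (simp only: exp_of_nat_mult)
  then have quadratic: "exp (real t / 2 * ln (1 / (1 - p\<^sup>2))) = (1 / sqrt (1 - p\<^sup>2)) ^ t"
    by (simp only: exp_ln[OF w])
  have net: "exp (real K * ln 9) = 9 ^ K" by (simp add: exp_of_nat_mult)
  have "exp (net_chernoff_exponent (real K) (real t) A p)
      = exp (real K * ln 9) * exp (- (2 * p * sqrt (real t * (real K * A))))
        * exp (real t / 2 * ln (1 / (1 - p\<^sup>2)))"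
    unfolding net_chernoff_exponent_def diff_conv_add_uminus exp_add ..
  then show ?thesis unfolding net quadratic by (simp only: mult.assoc)
qed

lemma net_chernoff_exponent_large:
  fixes k X A L :: real
  assumes k: "k \<ge> 2" and L: "ln 2 \<le> L" and A: "A = ln 9 + L" and X: "12 * (k * A) \<le> X"
  shows "\<exists>p. 0 < p \<and> p < 1 \<and> net_chernoff_exponent k X A p \<le> ln (19/10) - L"
proof -
  have L0: "L > 0" using L ln2_ge_two_thirds by linarith
  have kA: "k * A > 0" using k L0 unfolding A by (intro mult_pos_pos add_pos_pos) simp_all
  then have Xpos: "X > 0" using X by simp
  define p where "p = 2 * sqrt (k * A / X)"
  have p0: "p > 0" using kA Xpos by (simp add: p_def)
  have p2: "p\<^sup>2 = 4 * (k * A) / X" using kA Xpos by (simp add: p_def power_mult_distrib)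
  have p13: "p\<^sup>2 \<le> 1/3" unfolding p2 using X Xpos by (simp add: field_simps)
  then have p1: "p < 1" using power_less_imp_less_base[of p 2 1] by simp
  have "ln (1 / (1 - p\<^sup>2)) \<le> 1 / (1 - p\<^sup>2) - 1" using p13 by (intro ln_le_minus_one) simp
  also have "\<dots> = p\<^sup>2 / (1 - p\<^sup>2)" using p13 by (simp add: field_simps)
  also have "\<dots> \<le> p\<^sup>2 / (2/3)" using p13 by (intro divide_left_mono) auto
  finally have log_bound: "ln (1 / (1 - p\<^sup>2)) \<le> 3/2 * p\<^sup>2" by simp
  have "sqrt (k * A / X) * sqrt (X * (k * A)) = sqrt ((k * A)\<^sup>2)"
    using Xpos by (simp add: real_sqrt_mult[symmetric] power2_eq_square field_simps)
  then have linear_term: "2 * p * sqrt (X * (k * A)) = 4 * (k * A)"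
    using kA unfolding p_def by simp
  have quadratic_term: "X / 2 * (3/2 * p\<^sup>2) = 3 * (k * A)" unfolding p2 using Xpos by simp
  have "net_chernoff_exponent k X A p \<le> k * ln 9 - 2 * p * sqrt (X * (k * A)) + X / 2 * (3/2 * p\<^sup>2)"
    unfolding net_chernoff_exponent_def using log_bound Xpos by (simp add: mult_left_mono)
  also have "\<dots> = - (k * L)"
    unfolding linear_term quadratic_term by (simp add: A algebra_simps)
  also have "\<dots> \<le> ln (19/10) - L"
  proof -
    have "L \<le> k * L" using mult_right_mono[of 1 k L] k L0 by simp
    moreover have "0 \<le> ln (19/10::real)" by simp
    ultimately show ?thesis by linarith
  qed
  finally show ?thesis using p0 p1 by blast
qed

lemma net_chernoff_exponent_medium:
  fixes k X A L :: real
  assumes k: "k \<ge> 2" and L: "ln 2 \<le> L" and A: "A = ln 9 + L"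
    and X: "2 * (k * A) \<le> X" "X < 12 * (k * A)"
  shows "\<exists>p. 0 < p \<and> p < 1 \<and> net_chernoff_exponent k X A p \<le> ln (19/10) - L"
proof -
  have L0: "L > 0" using L ln2_ge_two_thirds by linarith
  have kA: "k * A > 0" using k L0 unfolding A by (intro mult_pos_pos add_pos_pos) simp_all
  define s where "s = sqrt (X / (k * A))"
  have kA0: "k * A \<noteq> 0" using kA by linarith
  have s0: "s \<ge> 0" using kA X by (simp add: s_def)
  have Xs: "X = (k * A) * s\<^sup>2" using kA kA0 X by (simp add: s_def)
  have "X * (k * A) = ((k * A) * s)\<^sup>2" unfolding Xs by (simp add: power2_eq_square)
  then have linear_term: "sqrt (X * (k * A)) = (k * A) * s" using kA s0 by simp
  have "sqrt 2 \<le> s" unfolding s_def using X kA by (intro real_sqrt_le_mono) (simp add: field_simps)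
  moreover have "7/5 \<le> sqrt (2::real)" by (rule real_le_rsqrt) (simp add: power2_eq_square)
  moreover have "s \<le> sqrt 12" unfolding s_def using X kA by (intro real_sqrt_le_mono) (simp add: field_simps)
  moreover have "sqrt (12::real) \<le> 7/2" by (rule real_sqrt_le_iff'[THEN iffD2]) (auto simp: power2_eq_square)
  ultimately have "\<bar>s - 3\<bar> \<le> 8/5" by (auto simp: abs_if)
  then have "(s - 3)\<^sup>2 \<le> (8/5)\<^sup>2" by (metis abs_ge_zero power2_abs power_mono)
  then have quad: "s\<^sup>2 / 6 - s \<le> -1" by (simp add: power2_eq_square algebra_simps)
  have log_bound: "ln (1 / (1 - (1/2::real)\<^sup>2)) \<le> 1/3"
    using ln_le_minus_one[of "4/3::real"] by (simp add: power2_eq_square)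
  have "net_chernoff_exponent k X A (1/2) \<le> k * ln 9 - sqrt (X * (k * A)) + X / 2 * (1/3)"
    unfolding net_chernoff_exponent_def using log_bound X kA by (simp add: mult_left_mono)
  also have "\<dots> = k * ln 9 + (k * A) * (s\<^sup>2 / 6 - s)"
    unfolding linear_term by (subst Xs) (simp add: algebra_simps)
  also have "\<dots> \<le> k * ln 9 - k * A" using quad kA mult_left_mono[OF quad, of "k * A"] by simp
  also have "\<dots> = - (k * L)" unfolding A by (simp add: algebra_simps)
  also have "\<dots> \<le> ln (19/10) - L"
  proof -
    have "L \<le> k * L" using mult_right_mono[of 1 k L] k L0 by simp
    moreover have "0 \<le> ln (19/10::real)" by simp
    ultimately show ?thesis by linarith
  qed
  finally show ?thesis by (intro exI[of _ "1/2"]) simp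
qed

lemma small_chernoff_quadratic_le:
  fixes q c r :: real
  assumes q: "2/9 \<le> q" "q \<le> 1" and c: "0 \<le> c" "c \<le> 15/38" and r: "sqrt q \<le> r" "r \<le> 1"
  shows "11/10 * r\<^sup>2 + (- 8/5 * sqrt 2) * r + (1/2 + (1 - q) * c) \<le> 0"
proof (rule quadratic_nonpos_between[OF _ r])
  have s2: "11/8 \<le> sqrt (2::real)" by (rule real_le_rsqrt) (simp add: power2_eq_square)
  show "11/10 * 1\<^sup>2 + (- 8/5 * sqrt 2) * 1 + (1/2 + (1 - q) * c) \<le> 0"
    using s2 c q mult_right_mono[of "1 - q" 1 c] by simp
  have "(11/10 - c) * (sqrt q)\<^sup>2 + (- 8/5 * sqrt 2) * sqrt q + (1/2 + c) \<le> 0"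
  proof (rule quadratic_nonpos_between)
    show "0 \<le> 11/10 - c" using c by simp
    have "sqrt (2/9) \<le> sqrt q" using q by (intro real_sqrt_le_mono)
    then show "sqrt 2 / 3 \<le> sqrt q" by (simp add: real_sqrt_divide)
    show "sqrt q \<le> 1" using q by simp
    have "(sqrt 2 / 3)\<^sup>2 = (2/9::real)" by (simp add: power_divide)
    moreover have "(- 8/5 * sqrt 2) * (sqrt 2 / 3) = (- 16/15::real)" by simp
    ultimately have "(11/10 - c) * (sqrt 2 / 3)\<^sup>2 + (- 8/5 * sqrt 2) * (sqrt 2 / 3) + (1/2 + c)
        = 11/45 - 17/30 + 7/9 * c" by (simp add: algebra_simps)
    then show "(11/10 - c) * (sqrt 2 / 3)\<^sup>2 + (- 8/5 * sqrt 2) * (sqrt 2 / 3) + (1/2 + c) \<le> 0"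
      using c by simp
    show "(11/10 - c) * 1\<^sup>2 + (- 8/5 * sqrt 2) * 1 + (1/2 + c) \<le> 0" using s2 by simp
  qed
  moreover have "(sqrt q)\<^sup>2 = q" using q by simp
  ultimately show "11/10 * (sqrt q)\<^sup>2 + (- 8/5 * sqrt 2) * sqrt q + (1/2 + (1 - q) * c) \<le> 0"
    by (simp add: algebra_simps)
  show "0 \<le> (11/10::real)" by simp
qed

lemma net_chernoff_exponent_small:
  fixes k X A L :: real
  assumes k: "k \<ge> 2" and L: "ln 2 \<le> L" and A: "A = ln 9 + L"
    and X: "2 * k * L \<le> X" "X < 2 * (k * A)"
  shows "\<exists>p. 0 < p \<and> p < 1 \<and> net_chernoff_exponent k X A p \<le> ln (19/10) - L"
proof -
  have L23: "2/3 \<le> L" using L ln2_ge_two_thirds by linarith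
  have ln9: "0 < ln (9::real)" by simp
  have Apos: "A > 0" using A L23 ln9 by linarith
  have kA: "k * A > 0" using k Apos by simp
  define r where "r = sqrt (X / (2 * (k * A)))"
  have X0: "0 \<le> X" using X(1) k L23 mult_nonneg_nonneg[of "2 * k" L] by linarith
  have kA0: "k * A \<noteq> 0" using kA by linarith
  have r0: "r \<ge> 0" and Xr: "X = 2 * (k * A) * r\<^sup>2" using kA kA0 X0 by (simp_all add: r_def)
  have "X * (k * A) = 2 * ((k * A) * r)\<^sup>2" unfolding Xr by (simp add: power2_eq_square)
  then have linear_term: "sqrt (X * (k * A)) = sqrt 2 * (k * A) * r"
    using kA r0 by (simp add: real_sqrt_mult)
  have r1: "r \<le> 1" using X kA by (simp add: r_def)
  define q where "q = L / A"
  have q1: "q \<le> 1" using A ln9 Apos by (simp add: q_def)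
  have q29: "2/9 \<le> q" using ln_9_le L23 Apos A by (simp add: q_def field_simps)
  have rq: "sqrt q \<le> r"
    unfolding r_def q_def using X kA Apos k by (intro real_sqrt_le_mono) (simp add: field_simps)
  define c where "c = (ln 9 - ln (19/10)) / (2 * ln (9::real))"
  have c0: "c \<ge> 0" using ln9 by (simp add: c_def)
  have "(9/19) / (2 * (9/4::real)) \<le> ln (19/10) / (2 * ln 9)"
    using ln_le_minus_one[of "10/19::real"] ln_9_le ln9 by (intro frac_le) (auto simp: ln_div)
  moreover have "c = 1/2 - ln (19/10) / (2 * ln 9)" unfolding c_def using ln9 by (simp add: field_simps)
  ultimately have c1: "c \<le> 15/38" by simp
  have quad: "11/10 * r\<^sup>2 + (- 8/5 * sqrt 2) * r + (1/2 + (1 - q) * c) \<le> 0"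
    using small_chernoff_quadratic_le[OF q29 q1 c0 c1 rq r1] .
  have "A * (1/2 + (1 - q) * c) = A / 2 + (A * (1 - q)) * c" by (simp add: algebra_simps)
  also have "A * (1 - q) = ln 9" unfolding q_def using Apos A by (simp add: field_simps)
  also have "ln 9 * c = (ln 9 - ln (19/10)) / 2" unfolding c_def using ln9 by simp
  finally have weighted: "A * (1/2 + (1 - q) * c) = A / 2 + (ln 9 - ln (19/10)) / 2" .
  have shift: "ln 9 - A * (1/2 + (1 - q) * c) = (ln (19/10) - L) / 2"
    by (subst weighted) (simp add: A field_simps)
  have log_bound: "ln (1 / (1 - (4/5::real)\<^sup>2)) \<le> 11/10" using ln_25_9_le by (simp add: power2_eq_square)
  have "net_chernoff_exponent k X A (4/5) \<le> k * ln 9 - 8/5 * sqrt (X * (k * A)) + X / 2 * (11/10)"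
    unfolding net_chernoff_exponent_def using mult_left_mono[OF log_bound, of "X / 2"] X0 by simp
  also have "\<dots> = k * (ln 9 + A * (11/10 * r\<^sup>2 + (- 8/5 * sqrt 2) * r))"
    unfolding linear_term by (subst Xr) (simp add: algebra_simps)
  also have "\<dots> \<le> k * (ln 9 - A * (1/2 + (1 - q) * c))"
  proof -
    have "A * (11/10 * r\<^sup>2 + (- 8/5 * sqrt 2) * r) \<le> A * (- (1/2 + (1 - q) * c))"
      using quad Apos by (intro mult_left_mono) auto
    then have "A * (11/10 * r\<^sup>2 + (- 8/5 * sqrt 2) * r) \<le> - (A * (1/2 + (1 - q) * c))"
      by (simp only: mult_minus_right)
    then show ?thesis using k by (intro mult_left_mono) auto
  qed
  also have "\<dots> \<le> ln (19/10) - L"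
  proof -
    have "ln (19/10::real) < ln 2" by (subst ln_less_cancel_iff) auto
    then have "ln (19/10) - L \<le> 0" using L by linarith
    then show ?thesis unfolding shift using k mult_right_mono_neg[of 2 k "(ln (19/10) - L) / 2"]
      by simp
  qed
  finally show ?thesis by (intro exI[of _ "4/5"]) simp
qed

lemma net_chernoff_parameter_exists:
  fixes K t :: nat and d :: real
  assumes K: "K \<ge> 2" and d: "0 < d" "d < 1/2" and t: "2 * real K * ln (1/d) \<le> real t"
  shows "\<exists>p. 0 < p \<and> p < 1 \<and>
    9 ^ K * exp (- (2 * p * sqrt (real t * real K * ln (9/d)))) * (1 / sqrt (1 - p\<^sup>2)) ^ t \<le> 19/10 * d"
proof -
  define L where "L = ln (1/d)"
  have L: "ln 2 \<le> L" unfolding L_def using d by (subst ln_le_cancel_iff) (auto simp: field_simps)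
  have A: "ln (9/d) = ln 9 + L" unfolding L_def using d by (simp add: ln_div)
  have k: "real K \<ge> 2" using K by simp
  have "\<exists>p. 0 < p \<and> p < 1 \<and> net_chernoff_exponent (real K) (real t) (ln (9/d)) p \<le> ln (19/10) - L"
  proof (cases "12 * (real K * ln (9/d)) \<le> real t")
    case True
    then show ?thesis by (rule net_chernoff_exponent_large[OF k L A])
  next
    case large: False
    show ?thesis
    proof (cases "2 * (real K * ln (9/d)) \<le> real t")
      case True
      with large show ?thesis by (intro net_chernoff_exponent_medium[OF k L A]) simp_all
    next
      case False
      with t show ?thesis by (intro net_chernoff_exponent_small[OF k L A]) (simp_all add: L_def)
    qed
  qed
  then obtain p where p: "0 < p" "p < 1"
    and le: "net_chernoff_exponent (real K) (real t) (ln (9/d)) p \<le> ln (19/10) - L" by blast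
  have "exp (net_chernoff_exponent (real K) (real t) (ln (9/d)) p) \<le> exp (ln (19/10) - L)"
    using le by simp
  also have "\<dots> = 19/10 * d" using d by (simp add: L_def exp_diff)
  finally have "9 ^ K * exp (- (2 * p * sqrt (real t * real K * ln (9/d)))) * (1 / sqrt (1 - p\<^sup>2)) ^ t
      \<le> 19/10 * d"
    unfolding exp_net_chernoff_exponent[OF less_imp_le[OF p(1)] p(2)] .
  with p show ?thesis by blast
qed

lemma gaussian_norm_tail_le:
  fixes l :: nat
  assumes l: "l \<ge> 1" and rho: "sqrt (real l) < rho"
  shows "exp (-(rho\<^sup>2 - real l)/2) * (rho / sqrt (real l)) ^ l \<le> exp (- (rho - sqrt (real l))\<^sup>2 / 2)"
proof -
  define Y where "Y = rho / sqrt (real l)"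
  have "0 < rho" using rho real_sqrt_ge_zero[of "real l"] by linarith
  then have Y: "Y > 0" using l unfolding Y_def by (intro divide_pos_pos) auto
  have "real l * ln Y \<le> real l * (Y - 1)" using ln_le_minus_one[OF Y] by (intro mult_left_mono) auto
  also have "real l * (Y - 1) = sqrt (real l) * rho - real l"
    using l unfolding Y_def by (simp add: field_simps real_sqrt_mult[symmetric])
  finally have "-(rho\<^sup>2 - real l)/2 + real l * ln Y \<le> - (rho - sqrt (real l))\<^sup>2 / 2"
    by (simp add: power2_eq_square field_simps)
  moreover have "exp (-(rho\<^sup>2 - real l)/2) * Y ^ l = exp (-(rho\<^sup>2 - real l)/2 + real l * ln Y)"
    using Y by (simp add: exp_add exp_of_nat_mult)
  ultimately show ?thesis unfolding Y_def by simp
qed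

lemma mean_part_tail_numeric:
  fixes l n :: nat and d :: real
  assumes l: "l \<ge> 1" and n: "n \<ge> 1" and d: "0 < d" "d < 1/2"
  defines "rho \<equiv> sqrt (2 * real (l + n)) + sqrt (2 * ln (2/d))"
  shows "sqrt (real l) < rho" and "exp (-(rho\<^sup>2 - real l)/2) * (rho / sqrt (real l)) ^ l \<le> d/10"
proof -
  define L where "L = ln (2/d)"
  have "ln (4::real) \<le> L" unfolding L_def using d by (subst ln_le_cancel_iff) (auto simp: field_simps)
  moreover have "ln (4::real) = 2 * ln 2" using ln_realpow[of 2 2] by simp
  ultimately have L: "4/3 \<le> L" using ln2_ge_two_thirds by simp
  define b where "b = sqrt (2 * L)"
  have b: "3/2 \<le> b" unfolding b_def using L by (intro real_le_rsqrt) (simp add: power2_eq_square)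
  have b2: "b\<^sup>2 = 2 * L" using L by (simp add: b_def)
  have "(sqrt (real l) + 1)\<^sup>2 \<le> 2 * real (l + n)"
  proof -
    have "0 \<le> (sqrt (real l) - 1)\<^sup>2" by simp
    then show ?thesis using n by (simp add: power2_eq_square algebra_simps)
  qed
  then have "sqrt (real l) + 1 \<le> sqrt (2 * real (l + n))" by (rule real_le_rsqrt)
  then have gap: "1 + b \<le> rho - sqrt (real l)" by (simp add: rho_def b_def L_def)
  then show "sqrt (real l) < rho" using b by simp
  have "(1 + b)\<^sup>2 \<le> (rho - sqrt (real l))\<^sup>2" using gap b by (intro power_mono) auto
  then have "- (rho - sqrt (real l))\<^sup>2 / 2 \<le> - (1 + b)\<^sup>2 / 2" by simp
  also have "\<dots> = - 1/2 - b - L"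
  proof -
    have "(1 + b)\<^sup>2 = 1 + 2 * b + 2 * L" using b2 by (simp add: power2_sum)
    then show ?thesis by linarith
  qed
  also have "\<dots> \<le> - L - ln 5"
  proof -
    have "ln 5 \<le> (2::real)"
      using exp_lower_Taylor_quadratic[of "2::real"] by (intro ln_le_if_le_exp) simp_all
    then show ?thesis using b by simp
  qed
  also have "- L - ln 5 = ln (d/10)"
    using d by (simp add: L_def ln_div ln_mult[of 2 5, simplified])
  finally have "exp (- (rho - sqrt (real l))\<^sup>2 / 2) \<le> d/10" using d by (simp add: ln_ge_iff)
  with gaussian_norm_tail_le[OF l \<open>sqrt (real l) < rho\<close>] show "exp (-(rho\<^sup>2 - real l)/2) * (rho / sqrt (real l)) ^ l \<le> d/10"
    by linarith
qed

section \<open>Tail bounds in the Gaussian model\<close>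

lemma exp_sum_le_weighted_exp:
  fixes c y :: "'b \<Rightarrow> real"
  assumes fin: "finite B" and ne: "B \<noteq> {}" and c: "\<And>b. b \<in> B \<Longrightarrow> c b > 0"
  shows "exp (th * (\<Sum>b\<in>B. y b)) \<le> (\<Sum>b\<in>B. c b / sum c B * exp (th * sum c B / c b * y b))"
proof -
  define C where "C = sum c B"
  have C: "C > 0" using fin ne c by (simp add: C_def sum_pos)
  have "(\<Sum>b\<in>B. (c b / C) *\<^sub>R (th * C / c b * y b)) = th * (\<Sum>b\<in>B. y b)"
    using C c by (auto simp: sum_distrib_left intro!: sum.cong dest: c)
  moreover have "exp (\<Sum>b\<in>B. (c b / C) *\<^sub>R (th * C / c b * y b))
      \<le> (\<Sum>b\<in>B. c b / C * exp (th * C / c b * y b))"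
    using C c by (intro convex_on_sum[OF fin ne exp_convex])
      (auto simp: C_def sum_divide_distrib[symmetric] less_imp_le)
  ultimately have "exp (th * (\<Sum>b\<in>B. y b)) \<le> (\<Sum>b\<in>B. c b / C * exp (th * C / c b * y b))"
    by simp
  then show ?thesis by (simp only: C_def)
qed

lemma nn_integral_exp_sum_le_weighted:
  fixes y :: "'b \<Rightarrow> 'a \<Rightarrow> real"
  assumes fin: "finite B" and ne: "B \<noteq> {}" and c: "\<And>b. b \<in> B \<Longrightarrow> c b > 0"
    and y: "\<And>b. y b \<in> borel_measurable M"
  shows "(\<integral>\<^sup>+\<omega>. ennreal (exp (th * (\<Sum>b\<in>B. y b \<omega>))) \<partial>M)
    \<le> (\<Sum>b\<in>B. ennreal (c b / sum c B) * (\<integral>\<^sup>+\<omega>. ennreal (exp (th * sum c B / c b * y b \<omega>)) \<partial>M))"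
proof -
  have C: "sum c B > 0" using fin ne c by (simp add: sum_pos)
  have [measurable]: "y b \<in> borel_measurable M" for b by (rule y)
  have "(\<integral>\<^sup>+\<omega>. ennreal (exp (th * (\<Sum>b\<in>B. y b \<omega>))) \<partial>M)
    \<le> (\<integral>\<^sup>+\<omega>. (\<Sum>b\<in>B. ennreal (c b / sum c B) * ennreal (exp (th * sum c B / c b * y b \<omega>))) \<partial>M)"
  proof (rule nn_integral_mono)
    fix \<omega>
    have "ennreal (exp (th * (\<Sum>b\<in>B. y b \<omega>)))
        \<le> ennreal (\<Sum>b\<in>B. c b / sum c B * exp (th * sum c B / c b * y b \<omega>))"
      by (rule ennreal_leI, rule exp_sum_le_weighted_exp[OF fin ne c])
    also have "\<dots> = (\<Sum>b\<in>B. ennreal (c b / sum c B) * ennreal (exp (th * sum c B / c b * y b \<omega>)))"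
      using C c by (subst sum_ennreal[symmetric]) (auto simp: ennreal_mult'[symmetric] less_imp_le)
    finally show "ennreal (exp (th * (\<Sum>b\<in>B. y b \<omega>)))
        \<le> (\<Sum>b\<in>B. ennreal (c b / sum c B) * ennreal (exp (th * sum c B / c b * y b \<omega>)))" .
  qed
  also have "\<dots> = (\<Sum>b\<in>B. ennreal (c b / sum c B) * (\<integral>\<^sup>+\<omega>. ennreal (exp (th * sum c B / c b * y b \<omega>)) \<partial>M))"
    by (subst nn_integral_sum) (auto intro!: sum.cong nn_integral_cmult)
  finally show ?thesis .
qed

lemma Chernoff_ineq_nn_integral_space:
  assumes [measurable]: "Z \<in> borel_measurable M" and lam: "lam > 0"
  shows "emeasure M {\<omega>\<in>space M. s \<le> Z \<omega>} \<le> ennreal (exp (- lam * s)) * (\<integral>\<^sup>+\<omega>. ennreal (exp (lam * Z \<omega>)) \<partial>M)"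
proof -
  have "(\<integral>\<^sup>+\<omega>. ennreal (exp (lam * Z \<omega>)) * indicator (space M) \<omega> \<partial>M) = (\<integral>\<^sup>+\<omega>. ennreal (exp (lam * Z \<omega>)) \<partial>M)"
    by (intro nn_integral_cong) simp
  then show ?thesis using Chernoff_ineq_nn_integral_ge[OF lam, of "space M" M Z s] by simp
qed

locale gaussian_pairs = prob_space M for M :: "'a measure" +
  fixes x :: "nat \<Rightarrow> 'a \<Rightarrow> real ^ 'n::finite" and eta :: "nat \<Rightarrow> 'a \<Rightarrow> real ^ 'l::finite"
    and mu :: "nat \<Rightarrow> real ^ 'n" and sx se :: real
  assumes sx_pos: "sx > 0" and se_pos: "se > 0"
    and x_distributed: "\<And>j. distributed M lborel (x j) (\<lambda>v. ennreal (iso_gauss_density TYPE('n) (mu j) sx v))"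
    and eta_distributed: "\<And>j. distributed M lborel (eta j) (\<lambda>v. ennreal (iso_gauss_density TYPE('l) 0 se v))"
    and indep: "indep_vars (\<lambda>_. borel)
      (\<lambda>i \<omega>. case i of Inl j \<Rightarrow> (x j \<omega>, 0) | Inr j \<Rightarrow> (0, eta j \<omega>)) (UNIV :: (nat + nat) set)"
begin

lemma borel_measurable_x[measurable]: "x j \<in> borel_measurable M"
  using distributed_measurable[OF x_distributed] by simp

lemma borel_measurable_eta[measurable]: "eta j \<in> borel_measurable M"
  using distributed_measurable[OF eta_distributed] by simp

lemma nn_integral_x_density_eq_1: "(\<integral>\<^sup>+v. ennreal (iso_gauss_density TYPE('n) m sx v) \<partial>lborel) = 1"
  using nn_integral_iso_gauss_density_eq_1[OF sx_pos sx_pos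
    distributed_nn_integral_density_eq_1[OF x_distributed]] .

lemma nn_integral_eta_density_eq_1: "(\<integral>\<^sup>+v. ennreal (iso_gauss_density TYPE('l) m se v) \<partial>lborel) = 1"
  using nn_integral_iso_gauss_density_eq_1[OF se_pos se_pos
    distributed_nn_integral_density_eq_1[OF eta_distributed]] .

lemma indep_vars_pairs:
  assumes G: "\<And>j. j \<in> J \<Longrightarrow> G j \<in> borel_measurable borel"
  shows "indep_vars (\<lambda>_. borel) (\<lambda>j \<omega>. G j (x j \<omega>, eta j \<omega>)) J"
proof -
  let ?X = "\<lambda>i \<omega>. case i of Inl j \<Rightarrow> (x j \<omega>, 0) | Inr j \<Rightarrow> (0, eta j \<omega>)"
  have pairs: "indep_vars (\<lambda>j. PiM {Inl j, Inr j} (\<lambda>_. borel)) (\<lambda>j \<omega>. restrict (\<lambda>i. ?X i \<omega>) {Inl j, Inr j}) J"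
    by (rule indep_vars_restrict[OF indep]) (auto simp: disjoint_family_on_def)
  have "indep_vars (\<lambda>_. borel) (\<lambda>j \<omega>. (\<lambda>f. G j (f (Inl j) + f (Inr j))) (restrict (\<lambda>i. ?X i \<omega>) {Inl j, Inr j})) J"
  proof (rule indep_vars_compose2[OF pairs])
    fix j assume j: "j \<in> J"
    note G[OF j, measurable]
    have [measurable]: "(\<lambda>f. f i) \<in> measurable (PiM {Inl j, Inr j} (\<lambda>_. borel)) (borel :: ((real^'n) \<times> (real^'l)) measure)"
      if "i \<in> {Inl j, Inr j}" for i
      using that by (rule measurable_component_singleton)
    show "(\<lambda>f. G j (f (Inl j) + f (Inr j))) \<in> measurable (PiM {Inl j, Inr j} (\<lambda>_. borel)) borel"
      by measurable
  qed
  then show ?thesis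
    by (rule indep_vars_cong[THEN iffD1, rotated 3]) auto
qed

lemma nn_integral_pair_eq_iterated:
  fixes F :: "(real ^ 'n) \<times> (real ^ 'l) \<Rightarrow> ennreal"
  assumes F[measurable]: "F \<in> borel_measurable borel"
  shows "(\<integral>\<^sup>+\<omega>. F (x j \<omega>, eta j \<omega>) \<partial>M) = (\<integral>\<^sup>+\<omega>1. (\<integral>\<^sup>+\<omega>2. F (x j \<omega>1, eta j \<omega>2) \<partial>M) \<partial>M)"
proof -
  let ?X = "\<lambda>i \<omega>. case i of Inl j \<Rightarrow> (x j \<omega>, 0) | Inr j \<Rightarrow> (0, eta j \<omega>)"
  define X1 where "X1 = (\<lambda>\<omega>. (x j \<omega>, 0::real^'l))"
  define X2 where "X2 = (\<lambda>\<omega>. (0::real^'n, eta j \<omega>))"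
  have r: "indep_var (PiM {Inl j} (\<lambda>_. borel)) (\<lambda>\<omega>. restrict (\<lambda>i. ?X i \<omega>) {Inl j})
                     (PiM {Inr j} (\<lambda>_. borel)) (\<lambda>\<omega>. restrict (\<lambda>i. ?X i \<omega>) {Inr j})"
    by (rule indep_var_restrict[OF indep]) auto
  have "indep_var borel ((\<lambda>f. f (Inl j)) \<circ> (\<lambda>\<omega>. restrict (\<lambda>i. ?X i \<omega>) {Inl j}))
                  borel ((\<lambda>f. f (Inr j)) \<circ> (\<lambda>\<omega>. restrict (\<lambda>i. ?X i \<omega>) {Inr j}))"
    by (rule indep_var_compose[OF r]; rule measurable_component_singleton; simp)
  moreover have "(\<lambda>f. f (Inl j)) \<circ> (\<lambda>\<omega>. restrict (\<lambda>i. ?X i \<omega>) {Inl j}) = X1"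
    and "(\<lambda>f. f (Inr j)) \<circ> (\<lambda>\<omega>. restrict (\<lambda>i. ?X i \<omega>) {Inr j}) = X2"
    by (auto simp: fun_eq_iff X1_def X2_def)
  ultimately have [measurable]: "X1 \<in> borel_measurable M" "X2 \<in> borel_measurable M"
    and joint: "distr M borel X1 \<Otimes>\<^sub>M distr M borel X2 = distr M (borel \<Otimes>\<^sub>M borel) (\<lambda>\<omega>. (X1 \<omega>, X2 \<omega>))"
    unfolding indep_var_distribution_eq by auto
  interpret D2: prob_space "distr M borel X2" by (rule prob_space_distr) simp
  define H where "H = (\<lambda>(p :: (real^'n) \<times> (real^'l), q :: (real^'n) \<times> (real^'l)). F (fst p, snd q))"
  have [measurable]: "F \<in> borel_measurable (borel \<Otimes>\<^sub>M borel)" using F by (simp add: borel_prod)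
  have [measurable]: "(fst :: (real^'n) \<times> (real^'l) \<Rightarrow> _) \<in> borel_measurable borel"
    "(snd :: (real^'n) \<times> (real^'l) \<Rightarrow> _) \<in> borel_measurable borel"
    by (intro borel_measurable_continuous_onI continuous_intros)+
  have [measurable]: "H \<in> borel_measurable (borel \<Otimes>\<^sub>M borel)" unfolding H_def by measurable
  have "(\<integral>\<^sup>+\<omega>. F (x j \<omega>, eta j \<omega>) \<partial>M) = (\<integral>\<^sup>+z. H z \<partial>distr M (borel \<Otimes>\<^sub>M borel) (\<lambda>\<omega>. (X1 \<omega>, X2 \<omega>)))"
    by (subst nn_integral_distr) (auto simp: H_def X1_def X2_def)
  also have "\<dots> = (\<integral>\<^sup>+p. (\<integral>\<^sup>+q. H (p, q) \<partial>distr M borel X2) \<partial>distr M borel X1)"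
    unfolding joint[symmetric] by (rule D2.nn_integral_fst[symmetric]) simp
  also have "\<dots> = (\<integral>\<^sup>+\<omega>1. (\<integral>\<^sup>+q. H (X1 \<omega>1, q) \<partial>distr M borel X2) \<partial>M)"
    by (subst nn_integral_distr) auto
  also have "\<dots> = (\<integral>\<^sup>+\<omega>1. (\<integral>\<^sup>+\<omega>2. H (X1 \<omega>1, X2 \<omega>2) \<partial>M) \<partial>M)"
    by (subst nn_integral_distr) auto
  also have "\<dots> = (\<integral>\<^sup>+\<omega>1. (\<integral>\<^sup>+\<omega>2. F (x j \<omega>1, eta j \<omega>2) \<partial>M) \<partial>M)"
    by (simp add: H_def X1_def X2_def)
  finally show ?thesis .
qed

lemma nn_integral_exp_bilinear:
  assumes u: "norm u = 1" and v: "norm v = 1" and lam: "lam\<^sup>2 * sx\<^sup>2 * se\<^sup>2 < 1"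
  shows "(\<integral>\<^sup>+\<omega>. ennreal (exp (lam * (inner u (eta j \<omega>) * inner v (x j \<omega> - mu j)))) \<partial>M)
       = ennreal (1 / sqrt (1 - lam\<^sup>2 * sx\<^sup>2 * se\<^sup>2))"
proof -
  have "(\<lambda>p::(real^'n) \<times> (real^'l). exp (lam * (inner u (snd p) * inner v (fst p - mu j)))) \<in> borel_measurable borel"
    by (intro borel_measurable_continuous_onI continuous_intros)
  then have "(\<integral>\<^sup>+\<omega>. ennreal (exp (lam * (inner u (eta j \<omega>) * inner v (x j \<omega> - mu j)))) \<partial>M)
     = (\<integral>\<^sup>+\<omega>1. (\<integral>\<^sup>+\<omega>2. ennreal (exp (lam * (inner u (eta j \<omega>2) * inner v (x j \<omega>1 - mu j)))) \<partial>M) \<partial>M)"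
    using nn_integral_pair_eq_iterated[of "\<lambda>p. ennreal (exp (lam * (inner u (snd p) * inner v (fst p - mu j))))" j]
    by simp
  also have "\<dots> = (\<integral>\<^sup>+\<omega>1. ennreal (exp ((se\<^sup>2 * lam\<^sup>2 / 2) * (inner v (x j \<omega>1 - mu j))\<^sup>2)) \<partial>M)"
  proof (rule nn_integral_cong)
    fix \<omega>1
    let ?c = "lam * inner v (x j \<omega>1 - mu j)"
    have "(\<integral>\<^sup>+\<omega>2. ennreal (exp (lam * (inner u (eta j \<omega>2) * inner v (x j \<omega>1 - mu j)))) \<partial>M)
        = (\<integral>\<^sup>+e. ennreal (iso_gauss_density TYPE('l) 0 se e) * ennreal (exp (inner (?c *\<^sub>R u) e)) \<partial>lborel)"
      by (subst distributed_nn_integral[OF eta_distributed, symmetric]) (auto simp: ac_simps)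
    also have "\<dots> = ennreal (exp (se\<^sup>2 * (norm (?c *\<^sub>R u))\<^sup>2 / 2))"
      using nn_integral_iso_gauss_exp_inner[OF se_pos nn_integral_eta_density_eq_1, of 0 "?c *\<^sub>R u"] by simp
    also have "se\<^sup>2 * (norm (?c *\<^sub>R u))\<^sup>2 / 2 = (se\<^sup>2 * lam\<^sup>2 / 2) * (inner v (x j \<omega>1 - mu j))\<^sup>2"
      using u by (simp add: power_mult_distrib)
    finally show "(\<integral>\<^sup>+\<omega>2. ennreal (exp (lam * (inner u (eta j \<omega>2) * inner v (x j \<omega>1 - mu j)))) \<partial>M)
        = ennreal (exp ((se\<^sup>2 * lam\<^sup>2 / 2) * (inner v (x j \<omega>1 - mu j))\<^sup>2))" .
  qed
  also have "\<dots> = (\<integral>\<^sup>+a. ennreal (iso_gauss_density TYPE('n) (mu j) sx a)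
      * ennreal (exp ((se\<^sup>2 * lam\<^sup>2 / 2) * (inner v (a - mu j))\<^sup>2)) \<partial>lborel)"
    by (subst distributed_nn_integral[OF x_distributed, symmetric]) auto
  also have "\<dots> = (\<integral>\<^sup>+a. ennreal (iso_gauss_density TYPE('n) 0 sx a)
      * ennreal (exp ((se\<^sup>2 * lam\<^sup>2 / 2) * (inner v a)\<^sup>2)) \<partial>lborel)"
    by (rule nn_integral_iso_gauss_density_shift[where h = "\<lambda>a. ennreal (exp ((se\<^sup>2 * lam\<^sup>2 / 2) * (inner v a)\<^sup>2))"])
      measurable
  also have "\<dots> = ennreal (1 / sqrt (1 - 2 * (se\<^sup>2 * lam\<^sup>2 / 2) * sx\<^sup>2))"
    by (rule nn_integral_iso_gauss_exp_inner_square[OF sx_pos v _ _ nn_integral_x_density_eq_1])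
      (use lam in \<open>auto simp: ac_simps\<close>)
  finally show ?thesis by (simp add: ac_simps)
qed

lemma emeasure_bilinear_sum_ge:
  assumes u: "norm u = 1" and v: "norm v = 1" and lam0: "lam > 0" and lam: "lam\<^sup>2 * sx\<^sup>2 * se\<^sup>2 < 1"
    and fin: "finite J"
  shows "emeasure M {\<omega>\<in>space M. s \<le> (\<Sum>j\<in>J. inner u (eta j \<omega>) * inner v (x j \<omega> - mu j))}
     \<le> ennreal (exp (- lam * s) * (1 / sqrt (1 - lam\<^sup>2 * sx\<^sup>2 * se\<^sup>2)) ^ card J)"
proof -
  let ?G = "\<lambda>j (p::(real^'n) \<times> (real^'l)). ennreal (exp (lam * (inner u (snd p) * inner v (fst p - mu j))))"
  have "(\<lambda>p::(real^'n) \<times> (real^'l). exp (lam * (inner u (snd p) * inner v (fst p - mu j)))) \<in> borel_measurable borel"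
    for j by (intro borel_measurable_continuous_onI continuous_intros)
  then have indep_factors: "indep_vars (\<lambda>_. borel) (\<lambda>j \<omega>. ?G j (x j \<omega>, eta j \<omega>)) J"
    by (intro indep_vars_pairs) simp
  have "emeasure M {\<omega>\<in>space M. s \<le> (\<Sum>j\<in>J. inner u (eta j \<omega>) * inner v (x j \<omega> - mu j))}
     \<le> ennreal (exp (- lam * s))
       * (\<integral>\<^sup>+\<omega>. ennreal (exp (lam * (\<Sum>j\<in>J. inner u (eta j \<omega>) * inner v (x j \<omega> - mu j)))) \<partial>M)"
    by (rule Chernoff_ineq_nn_integral_space[OF _ lam0]) measurable
  also have "(\<integral>\<^sup>+\<omega>. ennreal (exp (lam * (\<Sum>j\<in>J. inner u (eta j \<omega>) * inner v (x j \<omega> - mu j)))) \<partial>M)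
      = (\<integral>\<^sup>+\<omega>. (\<Prod>j\<in>J. ?G j (x j \<omega>, eta j \<omega>)) \<partial>M)"
    using fin by (simp add: sum_distrib_left exp_sum prod_ennreal)
  also have "\<dots> = (\<Prod>j\<in>J. \<integral>\<^sup>+\<omega>. ?G j (x j \<omega>, eta j \<omega>) \<partial>M)"
    by (rule indep_vars_nn_integral[OF fin indep_factors]) simp
  also have "\<dots> = (\<Prod>j\<in>J. ennreal (1 / sqrt (1 - lam\<^sup>2 * sx\<^sup>2 * se\<^sup>2)))"
    using nn_integral_exp_bilinear[OF u v lam] by simp
  also have "ennreal (exp (- lam * s)) * \<dots> = ennreal (exp (- lam * s) * (1 / sqrt (1 - lam\<^sup>2 * sx\<^sup>2 * se\<^sup>2)) ^ card J)"
    using lam by (simp add: prod_ennreal ennreal_mult' ennreal_power)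
  finally show ?thesis .
qed

lemma nn_integral_exp_inner_weighted_sum:
  assumes fin: "finite J"
  shows "(\<integral>\<^sup>+\<omega>. ennreal (exp (inner (\<Sum>j\<in>J. a j *\<^sub>R eta j \<omega>) h)) \<partial>M)
       = ennreal (exp (se\<^sup>2 / 2 * (\<Sum>j\<in>J. (a j)\<^sup>2) * (norm h)\<^sup>2))"
proof -
  let ?G = "\<lambda>j (p::(real^'n) \<times> (real^'l)). ennreal (exp (a j * inner (snd p) h))"
  have "(\<lambda>p::(real^'n) \<times> (real^'l). exp (a j * inner (snd p) h)) \<in> borel_measurable borel" for j
    by (intro borel_measurable_continuous_onI continuous_intros)
  then have indep_factors: "indep_vars (\<lambda>_. borel) (\<lambda>j \<omega>. ?G j (x j \<omega>, eta j \<omega>)) J"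
    by (intro indep_vars_pairs) simp
  have factor: "(\<integral>\<^sup>+\<omega>. ?G j (x j \<omega>, eta j \<omega>) \<partial>M) = ennreal (exp (se\<^sup>2 / 2 * (a j)\<^sup>2 * (norm h)\<^sup>2))" for j
  proof -
    have "(\<integral>\<^sup>+\<omega>. ?G j (x j \<omega>, eta j \<omega>) \<partial>M)
        = (\<integral>\<^sup>+e. ennreal (iso_gauss_density TYPE('l) 0 se e) * ennreal (exp (inner (a j *\<^sub>R h) e)) \<partial>lborel)"
      unfolding snd_conv by (subst distributed_nn_integral[OF eta_distributed, symmetric])
        (auto simp: inner_commute)
    also have "\<dots> = ennreal (exp (se\<^sup>2 * (norm (a j *\<^sub>R h))\<^sup>2 / 2))"
      using nn_integral_iso_gauss_exp_inner[OF se_pos nn_integral_eta_density_eq_1, of 0 "a j *\<^sub>R h"]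
      by simp
    also have "se\<^sup>2 * (norm (a j *\<^sub>R h))\<^sup>2 / 2 = se\<^sup>2 / 2 * (a j)\<^sup>2 * (norm h)\<^sup>2"
      by (simp add: power_mult_distrib power2_abs)
    finally show ?thesis .
  qed
  have "(\<integral>\<^sup>+\<omega>. ennreal (exp (inner (\<Sum>j\<in>J. a j *\<^sub>R eta j \<omega>) h)) \<partial>M)
      = (\<integral>\<^sup>+\<omega>. (\<Prod>j\<in>J. ?G j (x j \<omega>, eta j \<omega>)) \<partial>M)"
    using fin by (simp add: inner_sum_left exp_sum prod_ennreal)
  also have "\<dots> = (\<Prod>j\<in>J. \<integral>\<^sup>+\<omega>. ?G j (x j \<omega>, eta j \<omega>) \<partial>M)"
    by (rule indep_vars_nn_integral[OF fin indep_factors]) simp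
  also have "\<dots> = (\<Prod>j\<in>J. ennreal (exp (se\<^sup>2 / 2 * (a j)\<^sup>2 * (norm h)\<^sup>2)))"
    by (rule prod.cong[OF refl]) (rule factor)
  also have "\<dots> = ennreal (exp (se\<^sup>2 / 2 * (\<Sum>j\<in>J. (a j)\<^sup>2) * (norm h)\<^sup>2))"
    using fin by (simp add: prod_ennreal exp_sum[symmetric] sum_distrib_left sum_distrib_right)
  finally show ?thesis .
qed

text \<open>As in \<open>nn_integral_iso_gauss_exp_inner_square\<close>, \<open>exp (k \<parallel>w\<parallel>\<^sup>2)\<close> is written as a
  Gaussian expectation of \<open>exp \<langle>r w, h\<rangle>\<close> and the two integrals are swapped.\<close>

lemma nn_integral_exp_norm_sq_weighted_sum:
  assumes fin: "finite J" and k: "k \<ge> 0" and kC: "2 * k * se\<^sup>2 * (\<Sum>j\<in>J. (c j)\<^sup>2) < 1"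
  shows "(\<integral>\<^sup>+\<omega>. ennreal (exp (k * (norm (\<Sum>j\<in>J. c j *\<^sub>R eta j \<omega>))\<^sup>2)) \<partial>M)
       = ennreal ((1 / sqrt (1 - 2 * (k * (\<Sum>j\<in>J. (c j)\<^sup>2)) * se\<^sup>2)) ^ CARD('l))"
proof -
  define r where "r = sqrt (2 * k) / se"
  have r2: "se\<^sup>2 * r\<^sup>2 / 2 = k" using se_pos k by (simp add: r_def power_divide)
  let ?C = "\<Sum>j\<in>J. (c j)\<^sup>2"
  interpret P: pair_sigma_finite M "lborel :: (real^'l) measure" ..
  have "(\<integral>\<^sup>+\<omega>. ennreal (exp (k * (norm (\<Sum>j\<in>J. c j *\<^sub>R eta j \<omega>))\<^sup>2)) \<partial>M)
      = (\<integral>\<^sup>+\<omega>. (\<integral>\<^sup>+h. ennreal (iso_gauss_density TYPE('l) 0 se h)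
          * ennreal (exp (inner (\<Sum>j\<in>J. (r * c j) *\<^sub>R eta j \<omega>) h)) \<partial>lborel) \<partial>M)"
  proof (rule nn_integral_cong)
    fix \<omega>
    let ?w = "\<Sum>j\<in>J. c j *\<^sub>R eta j \<omega>"
    have "(\<Sum>j\<in>J. (r * c j) *\<^sub>R eta j \<omega>) = r *\<^sub>R ?w" by (simp add: scaleR_sum_right)
    moreover have "se\<^sup>2 * (norm (r *\<^sub>R ?w))\<^sup>2 / 2 = k * (norm ?w)\<^sup>2"
      using r2 by (simp add: power_mult_distrib abs_mult power2_abs)
    ultimately show "ennreal (exp (k * (norm ?w)\<^sup>2))
        = (\<integral>\<^sup>+h. ennreal (iso_gauss_density TYPE('l) 0 se h)
          * ennreal (exp (inner (\<Sum>j\<in>J. (r * c j) *\<^sub>R eta j \<omega>) h)) \<partial>lborel)"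
      using nn_integral_iso_gauss_exp_inner[OF se_pos nn_integral_eta_density_eq_1, of 0 "r *\<^sub>R ?w"] by simp
  qed
  also have "\<dots> = (\<integral>\<^sup>+h. (\<integral>\<^sup>+\<omega>. ennreal (iso_gauss_density TYPE('l) 0 se h)
      * ennreal (exp (inner (\<Sum>j\<in>J. (r * c j) *\<^sub>R eta j \<omega>) h)) \<partial>M) \<partial>lborel)"
    by (rule P.Fubini'[symmetric]) measurable
  also have "\<dots> = (\<integral>\<^sup>+h. ennreal (iso_gauss_density TYPE('l) 0 se h) * ennreal (exp ((k * ?C) * (norm h)\<^sup>2)) \<partial>lborel)"
  proof (rule nn_integral_cong)
    fix h :: "real^'l"
    have "se\<^sup>2 / 2 * (\<Sum>j\<in>J. (r * c j)\<^sup>2) = (se\<^sup>2 * r\<^sup>2 / 2) * ?C"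
      by (simp add: power_mult_distrib sum_distrib_left ac_simps)
    then have "se\<^sup>2 / 2 * (\<Sum>j\<in>J. (r * c j)\<^sup>2) = k * ?C" unfolding r2 .
    then show "(\<integral>\<^sup>+\<omega>. ennreal (iso_gauss_density TYPE('l) 0 se h)
        * ennreal (exp (inner (\<Sum>j\<in>J. (r * c j) *\<^sub>R eta j \<omega>) h)) \<partial>M)
      = ennreal (iso_gauss_density TYPE('l) 0 se h) * ennreal (exp ((k * ?C) * (norm h)\<^sup>2))"
      by (subst nn_integral_cmult) (simp_all add: nn_integral_exp_inner_weighted_sum[OF fin])
  qed
  also have "\<dots> = ennreal ((1 / sqrt (1 - 2 * (k * ?C) * se\<^sup>2)) ^ CARD('l))"
    by (rule nn_integral_iso_gauss_exp_norm_sq[OF se_pos _ nn_integral_eta_density_eq_1])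
      (use kC in \<open>simp add: ac_simps\<close>)
  finally show ?thesis .
qed

lemma nn_integral_exp_column_norm_sq:
  assumes fin: "finite J" and s: "0 \<le> s" "2 * s * se\<^sup>2 < 1" and b: "0 < (\<Sum>j\<in>J. (mu j $ b)\<^sup>2)"
  shows "(\<integral>\<^sup>+\<omega>. ennreal (exp (s / (\<Sum>j\<in>J. (mu j $ b)\<^sup>2) * (norm (\<Sum>j\<in>J. (mu j $ b) *\<^sub>R eta j \<omega>))\<^sup>2)) \<partial>M)
       = ennreal ((1 / sqrt (1 - 2 * s * se\<^sup>2)) ^ CARD('l))"
proof -
  have weight: "s / (\<Sum>j\<in>J. (mu j $ b)\<^sup>2) * (\<Sum>j\<in>J. (mu j $ b)\<^sup>2) = s" using b by simp
  have "2 * (s / (\<Sum>j\<in>J. (mu j $ b)\<^sup>2)) * se\<^sup>2 * (\<Sum>j\<in>J. (mu j $ b)\<^sup>2)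
      = 2 * (s / (\<Sum>j\<in>J. (mu j $ b)\<^sup>2) * (\<Sum>j\<in>J. (mu j $ b)\<^sup>2)) * se\<^sup>2"
    by (simp only: mult_ac)
  then have small: "2 * (s / (\<Sum>j\<in>J. (mu j $ b)\<^sup>2)) * se\<^sup>2 * (\<Sum>j\<in>J. (mu j $ b)\<^sup>2) < 1"
    unfolding weight using s by linarith
  have "s / (\<Sum>j\<in>J. (mu j $ b)\<^sup>2) \<ge> 0" using s b by simp
  from nn_integral_exp_norm_sq_weighted_sum[OF fin this small] show ?thesis
    unfolding weight by (simp add: mult.assoc)
qed

text \<open>The columns \<open>Y\<^sub>b = \<Sum>\<^sub>j \<mu>\<^sub>j\<^sub>b \<eta>\<^sub>j\<close> are dependent; convexity of \<open>exp\<close> with weights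
  proportional to their variances reduces the joint exponential moment to single columns.\<close>

lemma nn_integral_exp_sum_column_norms_le:
  assumes fin: "finite J" and th: "th \<ge> 0"
    and T: "se\<^sup>2 * (\<Sum>j\<in>J. (norm (mu j))\<^sup>2) \<le> T" and thT: "2 * th * T < 1"
  shows "(\<integral>\<^sup>+\<omega>. ennreal (exp (th * (\<Sum>b\<in>UNIV. (norm (\<Sum>j\<in>J. (mu j $ b) *\<^sub>R eta j \<omega>))\<^sup>2))) \<partial>M)
     \<le> ennreal ((1 / sqrt (1 - 2 * th * T)) ^ CARD('l))"
proof -
  let ?Y = "\<lambda>b \<omega>. \<Sum>j\<in>J. (mu j $ b) *\<^sub>R eta j \<omega>"
  define c where "c b = (\<Sum>j\<in>J. (mu j $ b)\<^sup>2)" for b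
  define B where "B = {b. c b > 0}"
  have c0: "c b \<ge> 0" for b by (simp add: c_def sum_nonneg)
  have "(\<Sum>b\<in>B. c b) = (\<Sum>b\<in>UNIV. c b)"
    by (rule sum.mono_neutral_left) (use c0 in \<open>auto simp: B_def less_le\<close>)
  also have "\<dots> = (\<Sum>j\<in>J. (norm (mu j))\<^sup>2)"
    unfolding c_def power2_norm_vec by (subst sum.swap) simp
  finally have CT: "se\<^sup>2 * sum c B \<le> T" using T by simp
  have "?Y b \<omega> = 0" if "b \<notin> B" for b \<omega>
  proof -
    have "c b = 0" using that c0[of b] by (simp add: B_def)
    then show ?thesis using fin unfolding c_def by (subst (asm) sum_nonneg_eq_0_iff) auto
  qed
  then have only_B: "(\<Sum>b\<in>UNIV. (norm (?Y b \<omega>))\<^sup>2) = (\<Sum>b\<in>B. (norm (?Y b \<omega>))\<^sup>2)" for \<omega>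
    by (intro sum.mono_neutral_right) auto
  have T0: "T \<ge> 0" using T se_pos by (smt (verit) mult_nonneg_nonneg sum_nonneg zero_le_power2)
  show ?thesis
  proof (cases "B = {}")
    case True
    have "1 \<le> 1 / sqrt (1 - 2 * th * T)" using thT th T0 by (simp add: real_sqrt_le_1_iff)
    then have "1 \<le> (1 / sqrt (1 - 2 * th * T)) ^ CARD('l)" by (rule one_le_power)
    then show ?thesis unfolding only_B True by (simp add: emeasure_space_1)
  next
    case False
    define C where "C = sum c B"
    have cpos: "b \<in> B \<Longrightarrow> c b > 0" for b by (simp add: B_def)
    have C: "C > 0" unfolding C_def using False cpos by (simp add: sum_pos)
    have thC: "2 * (th * C) * se\<^sup>2 \<le> 2 * th * T" using mult_left_mono[OF CT th] by (simp add: C_def ac_simps)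
    define V where "V = (1 / sqrt (1 - 2 * (th * C) * se\<^sup>2)) ^ CARD('l)"
    have column: "(\<integral>\<^sup>+\<omega>. ennreal (exp (th * C / c b * (norm (?Y b \<omega>))\<^sup>2)) \<partial>M) = ennreal V"
      if "b \<in> B" for b
      unfolding V_def c_def
      by (rule nn_integral_exp_column_norm_sq[OF fin]) (use th C thC thT cpos[OF that] in \<open>auto simp: c_def\<close>)
    have "(\<integral>\<^sup>+\<omega>. ennreal (exp (th * (\<Sum>b\<in>UNIV. (norm (?Y b \<omega>))\<^sup>2))) \<partial>M)
        \<le> (\<Sum>b\<in>B. ennreal (c b / C) * (\<integral>\<^sup>+\<omega>. ennreal (exp (th * C / c b * (norm (?Y b \<omega>))\<^sup>2)) \<partial>M))"
      unfolding only_B C_def by (rule nn_integral_exp_sum_le_weighted[OF _ False cpos]) simp_all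
    also have "\<dots> = (\<Sum>b\<in>B. ennreal (c b / C) * ennreal V)"
      by (rule sum.cong[OF refl]) (simp only: column)
    also have "\<dots> = ennreal (\<Sum>b\<in>B. c b / C * V)"
    proof -
      have "0 \<le> V" using thC thT by (simp add: V_def)
      then show ?thesis using C c0 by (subst sum_ennreal[symmetric]) (auto simp: ennreal_mult'[symmetric])
    qed
    also have "(\<Sum>b\<in>B. c b / C * V) = V"
      using C by (simp add: sum_distrib_right[symmetric] sum_divide_distrib[symmetric] C_def)
    also have "V \<le> (1 / sqrt (1 - 2 * th * T)) ^ CARD('l)"
      using thC thT unfolding V_def by (intro power_mono divide_left_mono real_sqrt_le_mono) auto
    finally show ?thesis by (simp add: ennreal_leI)
  qed
qed

lemma prob_centered_part_gt:
  assumes fin: "finite J" and lam0: "lam > 0" and lam: "lam\<^sup>2 * sx\<^sup>2 * se\<^sup>2 < 1"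
  shows "measure M {\<omega>\<in>space M. 2 * b < spec_norm (\<Sum>j\<in>J. outer (eta j \<omega>) (x j \<omega> - mu j))}
    \<le> 9 ^ (CARD('l) + CARD('n)) * (exp (- lam * b) * (1 / sqrt (1 - lam\<^sup>2 * sx\<^sup>2 * se\<^sup>2)) ^ card J)"
proof -
  obtain Nl :: "(real ^ 'l) set" where Nl: "Nl \<subseteq> {v. norm v = 1}" "finite Nl" "real (card Nl) \<le> 9 ^ CARD('l)"
    "\<And>v. norm v = 1 \<Longrightarrow> \<exists>w\<in>Nl. norm (v - w) \<le> 1/4"
    using sphere_net_exists[of "1/4"] by auto
  obtain Nn :: "(real ^ 'n) set" where Nn: "Nn \<subseteq> {v. norm v = 1}" "finite Nn" "real (card Nn) \<le> 9 ^ CARD('n)"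
    "\<And>v. norm v = 1 \<Longrightarrow> \<exists>w\<in>Nn. norm (v - w) \<le> 1/4"
    using sphere_net_exists[of "1/4"] by auto
  define Z where "Z u v \<omega> = (\<Sum>j\<in>J. inner u (eta j \<omega>) * inner v (x j \<omega> - mu j))"
    for u :: "real ^ 'l" and v :: "real ^ 'n" and \<omega>
  define E where "E uv = {\<omega>\<in>space M. b \<le> Z (fst uv) (snd uv) \<omega>}" for uv
  define bound where "bound = exp (- lam * b) * (1 / sqrt (1 - lam\<^sup>2 * sx\<^sup>2 * se\<^sup>2)) ^ card J"
  have E_sets: "E uv \<in> sets M" for uv unfolding E_def Z_def by measurable
  have "{\<omega>\<in>space M. 2 * b < spec_norm (\<Sum>j\<in>J. outer (eta j \<omega>) (x j \<omega> - mu j))} \<subseteq> (\<Union>uv\<in>Nl \<times> Nn. E uv)"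
  proof (rule subsetI, rule ccontr)
    fix \<omega> assume \<omega>: "\<omega> \<in> {\<omega>\<in>space M. 2 * b < spec_norm (\<Sum>j\<in>J. outer (eta j \<omega>) (x j \<omega> - mu j))}"
      and "\<omega> \<notin> (\<Union>uv\<in>Nl \<times> Nn. E uv)"
    then have "Z u v \<omega> \<le> b" if "u \<in> Nl" "v \<in> Nn" for u v
      using that by (force simp: E_def)
    then have "spec_norm (\<Sum>j\<in>J. outer (eta j \<omega>) (x j \<omega> - mu j)) \<le> 2 * b"
      using Nl(1,4) Nn(4)
      by (intro spec_norm_le_net[where Nl = Nl and Nn = Nn])
        (auto simp: Z_def sum_matrix_vector_mult[OF fin] inner_sum_right inner_outer_mult inner_commute)
    then show False using \<omega> by simp
  qed
  then have "measure M {\<omega>\<in>space M. 2 * b < spec_norm (\<Sum>j\<in>J. outer (eta j \<omega>) (x j \<omega> - mu j))}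
      \<le> measure M (\<Union>uv\<in>Nl \<times> Nn. E uv)"
    using Nl(2) Nn(2) E_sets by (intro finite_measure_mono) auto
  also have "\<dots> \<le> (\<Sum>uv\<in>Nl \<times> Nn. measure M (E uv))"
    using Nl(2) Nn(2) E_sets by (intro finite_measure_subadditive_finite) auto
  also have "\<dots> \<le> (\<Sum>uv\<in>Nl \<times> Nn. bound)"
  proof (rule sum_mono)
    fix uv assume "uv \<in> Nl \<times> Nn"
    then have "norm (fst uv) = 1" "norm (snd uv) = 1" using Nl(1) Nn(1) by auto
    from emeasure_bilinear_sum_ge[OF this lam0 lam fin]
    have "emeasure M (E uv) \<le> ennreal bound" unfolding E_def Z_def bound_def .
    then show "measure M (E uv) \<le> bound"
      using lam by (simp add: emeasure_eq_measure bound_def)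
  qed
  also have "\<dots> = real (card Nl) * real (card Nn) * bound" by (simp add: card_cartesian_product)
  also have "\<dots> \<le> 9 ^ (CARD('l) + CARD('n)) * bound"
    using Nl(3) Nn(3) lam by (simp add: power_add bound_def mult_mono)
  finally show ?thesis unfolding bound_def .
qed

lemma prob_centered_part_large:
  assumes d: "0 < d" "d < 1/2" and t: "2 * real (CARD('n) + CARD('l)) * ln (1 / d) \<le> real t"
  shows "measure M {\<omega>\<in>space M. sqrt (real t) * se * (4 * sx * sqrt (real (CARD('n) + CARD('l)) * ln (9 / d)))
    < spec_norm (\<Sum>j = 1..t. outer (eta j \<omega>) (x j \<omega> - mu j))} \<le> 19/10 * d"
proof -
  let ?K = "CARD('n) + CARD('l)"
  have "CARD('n) \<ge> 1" "CARD('l) \<ge> 1" by (simp_all add: Suc_le_eq)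
  then have "?K \<ge> 2" by linarith
  from net_chernoff_parameter_exists[OF this d t]
  obtain p where p: "0 < p" "p < 1"
    and bound: "9 ^ ?K * exp (- (2 * p * sqrt (real t * real ?K * ln (9/d)))) * (1 / sqrt (1 - p\<^sup>2)) ^ t
      \<le> 19/10 * d" by blast
  define lam where "lam = p / (sx * se)"
  define B where "B = sqrt (real t) * se * (4 * sx * sqrt (real ?K * ln (9 / d)))"
  define R where "R = sqrt (real t * real ?K * ln (9/d))"
  have B: "B = 4 * sx * se * R" unfolding B_def R_def by (simp add: real_sqrt_mult ac_simps)
  have lam: "lam > 0" "lam\<^sup>2 * sx\<^sup>2 * se\<^sup>2 = p\<^sup>2"
    using p sx_pos se_pos by (simp_all add: lam_def power_divide power_mult_distrib)
  have "p\<^sup>2 < 1" using p by (simp add: abs_square_less_1)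
  have exponent: "- lam * (B / 2) = - (2 * p * sqrt (real t * real ?K * ln (9/d)))"
    using sx_pos se_pos unfolding R_def[symmetric] B by (simp add: lam_def)
  have "measure M {\<omega>\<in>space M. B < spec_norm (\<Sum>j = 1..t. outer (eta j \<omega>) (x j \<omega> - mu j))}
    \<le> 9 ^ (CARD('l) + CARD('n)) * (exp (- lam * (B / 2)) * (1 / sqrt (1 - lam\<^sup>2 * sx\<^sup>2 * se\<^sup>2)) ^ card {1..t})"
    using prob_centered_part_gt[where J = "{1..t}" and lam = lam and b = "B / 2"] lam \<open>p\<^sup>2 < 1\<close> by simp
  also have "\<dots> = 9 ^ ?K * exp (- (2 * p * sqrt (real t * real ?K * ln (9/d)))) * (1 / sqrt (1 - p\<^sup>2)) ^ t"
    unfolding exponent lam(2) by (simp add: add.commute)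
  also note bound
  finally show ?thesis unfolding B_def .
qed

lemma emeasure_sum_column_norms_ge:
  assumes fin: "finite J" and T: "se\<^sup>2 * (\<Sum>j\<in>J. (norm (mu j))\<^sup>2) \<le> T" and T0: "T > 0"
    and rho0: "rho > 0" and rho: "real CARD('l) < rho\<^sup>2"
  shows "emeasure M {\<omega>\<in>space M. T * rho\<^sup>2 \<le> (\<Sum>b\<in>UNIV. (norm (\<Sum>j\<in>J. (mu j $ b) *\<^sub>R eta j \<omega>))\<^sup>2)}
    \<le> ennreal (exp (-(rho\<^sup>2 - real CARD('l))/2) * (rho / sqrt (real CARD('l))) ^ CARD('l))"
proof -
  define l where "l = CARD('l)"
  define Q where "Q \<omega> = (\<Sum>b\<in>UNIV. (norm (\<Sum>j\<in>J. (mu j $ b) *\<^sub>R eta j \<omega>))\<^sup>2)" for \<omega>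
  define th where "th = (1 - real l / rho\<^sup>2) / (2 * T)"
  have th: "th > 0" and thT: "2 * th * T = 1 - real l / rho\<^sup>2"
    using rho rho0 T0 by (simp_all add: l_def th_def field_simps)
  have "emeasure M {\<omega>\<in>space M. T * rho\<^sup>2 \<le> Q \<omega>}
      \<le> ennreal (exp (- th * (T * rho\<^sup>2))) * (\<integral>\<^sup>+\<omega>. ennreal (exp (th * Q \<omega>)) \<partial>M)"
    by (rule Chernoff_ineq_nn_integral_space[OF _ th]) (simp add: Q_def)
  also have "\<dots> \<le> ennreal (exp (- th * (T * rho\<^sup>2))) * ennreal ((1 / sqrt (1 - 2 * th * T)) ^ l)"
  proof (rule mult_left_mono)
    have "2 * th * T < 1" using thT rho0 by (simp add: l_def)
    from nn_integral_exp_sum_column_norms_le[OF fin less_imp_le[OF th] T this]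
    show "(\<integral>\<^sup>+\<omega>. ennreal (exp (th * Q \<omega>)) \<partial>M) \<le> ennreal ((1 / sqrt (1 - 2 * th * T)) ^ l)"
      unfolding Q_def l_def .
  qed simp
  also have "\<dots> = ennreal (exp (-(rho\<^sup>2 - real l)/2) * (rho / sqrt (real l)) ^ l)"
  proof -
    have "th * (T * rho\<^sup>2) = (rho\<^sup>2 - real l) / 2"
      using T0 rho0 by (simp add: th_def field_simps)
    then have exponent: "- th * (T * rho\<^sup>2) = -(rho\<^sup>2 - real l) / 2" by simp
    have "1 / sqrt (1 - 2 * th * T) = rho / sqrt (real l)"
      using rho0 by (simp add: thT real_sqrt_divide)
    then show ?thesis unfolding exponent by (simp add: ennreal_mult'[symmetric])
  qed
  finally show ?thesis unfolding Q_def l_def .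
qed

lemma prob_mean_part_gt:
  assumes fin: "finite J" and T: "se\<^sup>2 * (\<Sum>j\<in>J. (norm (mu j))\<^sup>2) \<le> T"
    and rho: "sqrt (real CARD('l)) < rho"
  shows "measure M {\<omega>\<in>space M. sqrt T * rho < spec_norm (\<Sum>j\<in>J. outer (eta j \<omega>) (mu j))}
    \<le> exp (-(rho\<^sup>2 - real CARD('l))/2) * (rho / sqrt (real CARD('l))) ^ CARD('l)"
    (is "measure M ?E \<le> ?bound")
proof (cases "T = 0")
  case True
  have "(\<Sum>j\<in>J. (norm (mu j))\<^sup>2) \<le> 0" using T True se_pos by (simp add: mult_le_0_iff)
  then have "(\<Sum>j\<in>J. (norm (mu j))\<^sup>2) = 0" by (simp add: antisym sum_nonneg)
  then have "mu j = 0" if "j \<in> J" for j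
    using fin that by (simp add: sum_nonneg_eq_0_iff)
  then have "(\<Sum>j\<in>J. outer (eta j \<omega>) (mu j)) = 0" for \<omega> by (simp add: outer_def vec_eq_iff)
  then have "?E = {}" using True spec_norm_le_norm[of "0 :: real ^ 'n ^ 'l"] by simp
  then have "measure M ?E = 0" by (simp only: measure_empty)
  moreover have "rho > 0" using rho real_sqrt_ge_zero[of "real CARD('l)"] by linarith
  ultimately show ?thesis by simp
next
  case False
  have T0: "T > 0" using False T se_pos by (smt (verit) mult_nonneg_nonneg sum_nonneg zero_le_power2)
  have rho0: "rho > 0" using rho real_sqrt_ge_zero[of "real CARD('l)"] by linarith
  have rho2: "real CARD('l) < rho\<^sup>2" using rho rho0 real_sqrt_less_iff[of "real CARD('l)" "rho\<^sup>2"] by simp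
  have "?E \<subseteq> {\<omega>\<in>space M. T * rho\<^sup>2 \<le> (\<Sum>b\<in>UNIV. (norm (\<Sum>j\<in>J. (mu j $ b) *\<^sub>R eta j \<omega>))\<^sup>2)}"
  proof safe
    fix \<omega> assume gt: "sqrt T * rho < spec_norm (\<Sum>j\<in>J. outer (eta j \<omega>) (mu j))"
    have "spec_norm (\<Sum>j\<in>J. outer (eta j \<omega>) (mu j))
        \<le> sqrt (\<Sum>b\<in>UNIV. (norm (\<Sum>j\<in>J. (mu j $ b) *\<^sub>R eta j \<omega>))\<^sup>2)"
      using spec_norm_le_norm by (simp add: power2_norm_sum_outer[symmetric])
    then have "sqrt (T * rho\<^sup>2) \<le> sqrt (\<Sum>b\<in>UNIV. (norm (\<Sum>j\<in>J. (mu j $ b) *\<^sub>R eta j \<omega>))\<^sup>2)"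
      using gt T0 rho0 by (simp add: real_sqrt_mult)
    then show "T * rho\<^sup>2 \<le> (\<Sum>b\<in>UNIV. (norm (\<Sum>j\<in>J. (mu j $ b) *\<^sub>R eta j \<omega>))\<^sup>2)" by simp
  qed
  then have "emeasure M ?E \<le> emeasure M {\<omega>\<in>space M. T * rho\<^sup>2 \<le> (\<Sum>b\<in>UNIV. (norm (\<Sum>j\<in>J. (mu j $ b) *\<^sub>R eta j \<omega>))\<^sup>2)}"
    by (intro emeasure_mono) auto
  also have "\<dots> \<le> ennreal ?bound" by (rule emeasure_sum_column_norms_ge[OF fin T T0 rho0 rho2])
  finally have "ennreal (measure M ?E) \<le> ennreal ?bound" by (simp add: emeasure_eq_measure)
  moreover have "0 \<le> ?bound" using rho0 by simp
  ultimately show ?thesis by (simp only: ennreal_le_iff)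
qed

lemma prob_mean_part_large:
  assumes mu: "\<And>j. norm (mu j) \<le> muhat" and d: "0 < d" "d < 1/2"
  shows "measure M {\<omega>\<in>space M.
    sqrt (real t) * se * (muhat * (sqrt (2 * real (CARD('l) + CARD('n))) + sqrt (2 * ln (2 / d))))
      < spec_norm (\<Sum>j = 1..t. outer (eta j \<omega>) (mu j))} \<le> d / 10"
proof -
  define rho where "rho = sqrt (2 * real (CARD('l) + CARD('n))) + sqrt (2 * ln (2 / d))"
  have l: "CARD('l) \<ge> 1" and n: "CARD('n) \<ge> 1" by (simp_all add: Suc_le_eq)
  have muhat: "muhat \<ge> 0" using mu[of 0] norm_ge_zero[of "mu 0"] by linarith
  have "se\<^sup>2 * (\<Sum>j = 1..t. (norm (mu j))\<^sup>2) \<le> se\<^sup>2 * (\<Sum>j = 1..t. muhat\<^sup>2)"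
    using mu by (intro mult_left_mono sum_mono power_mono) simp_all
  then have T: "se\<^sup>2 * (\<Sum>j = 1..t. (norm (mu j))\<^sup>2) \<le> (sqrt (real t) * se * muhat)\<^sup>2"
    by (simp add: power_mult_distrib ac_simps)
  have "measure M {\<omega>\<in>space M. sqrt ((sqrt (real t) * se * muhat)\<^sup>2) * rho
      < spec_norm (\<Sum>j = 1..t. outer (eta j \<omega>) (mu j))}
    \<le> exp (-(rho\<^sup>2 - real CARD('l))/2) * (rho / sqrt (real CARD('l))) ^ CARD('l)"
    using mean_part_tail_numeric(1)[OF l n d] by (intro prob_mean_part_gt[OF _ T]) (simp_all add: rho_def)
  also have "\<dots> \<le> d / 10" using mean_part_tail_numeric(2)[OF l n d] by (simp add: rho_def)
  finally show ?thesis
    unfolding rho_def[symmetric] using se_pos muhat by (simp add: mult.assoc)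
qed

lemma prob_spec_norm_sum_outer_le:
  "measure M {\<omega>\<in>space M. spec_norm (\<Sum>j\<in>J. outer (eta j \<omega>) (x j \<omega>)) \<le> a + b}
    \<ge> 1 - measure M {\<omega>\<in>space M. a < spec_norm (\<Sum>j\<in>J. outer (eta j \<omega>) (x j \<omega> - mu j))}
      - measure M {\<omega>\<in>space M. b < spec_norm (\<Sum>j\<in>J. outer (eta j \<omega>) (mu j))}"
proof -
  let ?S0 = "\<lambda>\<omega>. \<Sum>j\<in>J. outer (eta j \<omega>) (x j \<omega> - mu j)" and ?Sm = "\<lambda>\<omega>. \<Sum>j\<in>J. outer (eta j \<omega>) (mu j)"
  have split: "(\<Sum>j\<in>J. outer (eta j \<omega>) (x j \<omega>)) = ?S0 \<omega> + ?Sm \<omega>" for \<omega>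
    by (simp add: sum.distrib[symmetric] outer_add_right[symmetric])
  have "space M - ({\<omega>\<in>space M. a < spec_norm (?S0 \<omega>)} \<union> {\<omega>\<in>space M. b < spec_norm (?Sm \<omega>)})
      \<subseteq> {\<omega>\<in>space M. spec_norm (\<Sum>j\<in>J. outer (eta j \<omega>) (x j \<omega>)) \<le> a + b}"
  proof (rule subsetI)
    fix \<omega> assume "\<omega> \<in> space M - ({\<omega>\<in>space M. a < spec_norm (?S0 \<omega>)} \<union> {\<omega>\<in>space M. b < spec_norm (?Sm \<omega>)})"
    then have "\<omega> \<in> space M" "spec_norm (?S0 \<omega>) \<le> a" "spec_norm (?Sm \<omega>) \<le> b" by auto
    then show "\<omega> \<in> {\<omega>\<in>space M. spec_norm (\<Sum>j\<in>J. outer (eta j \<omega>) (x j \<omega>)) \<le> a + b}"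
      using spec_norm_triangle[of "?S0 \<omega>" "?Sm \<omega>"] unfolding split by simp
  qed
  then have "measure M (space M - ({\<omega>\<in>space M. a < spec_norm (?S0 \<omega>)} \<union> {\<omega>\<in>space M. b < spec_norm (?Sm \<omega>)}))
      \<le> measure M {\<omega>\<in>space M. spec_norm (\<Sum>j\<in>J. outer (eta j \<omega>) (x j \<omega>)) \<le> a + b}"
    by (intro finite_measure_mono) measurable
  moreover have "measure M (space M - ({\<omega>\<in>space M. a < spec_norm (?S0 \<omega>)} \<union> {\<omega>\<in>space M. b < spec_norm (?Sm \<omega>)}))
      = 1 - measure M ({\<omega>\<in>space M. a < spec_norm (?S0 \<omega>)} \<union> {\<omega>\<in>space M. b < spec_norm (?Sm \<omega>)})"
    by (intro prob_compl) measurable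
  moreover have "measure M ({\<omega>\<in>space M. a < spec_norm (?S0 \<omega>)} \<union> {\<omega>\<in>space M. b < spec_norm (?Sm \<omega>)})
      \<le> measure M {\<omega>\<in>space M. a < spec_norm (?S0 \<omega>)} + measure M {\<omega>\<in>space M. b < spec_norm (?Sm \<omega>)}"
    by (intro measure_Un_le) measurable
  ultimately show ?thesis by linarith
qed

end

theorem lemma5:
  fixes M :: "'a measure"
    and x :: "nat \<Rightarrow> 'a \<Rightarrow> real ^ 'n"
    and eta :: "nat \<Rightarrow> 'a \<Rightarrow> real ^ 'l"
    and mu :: "nat \<Rightarrow> real ^ 'n"
    and sx se muhat delta :: real
    and t :: nat
  assumes "prob_space M"
    and "sx > 0" and "se > 0" and "muhat \<ge> 0"
    and "\<And>j. norm (mu j) \<le> muhat"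
    and "\<And>j. distributed M lborel (x j) (\<lambda>v. ennreal (iso_gauss_density TYPE('n) (mu j) sx v))"
    and "\<And>j. distributed M lborel (eta j) (\<lambda>v. ennreal (iso_gauss_density TYPE('l) 0 se v))"
    and "prob_space.indep_vars M (\<lambda>_. borel)
           (\<lambda>i \<omega>. case i of Inl j \<Rightarrow> (x j \<omega>, 0) | Inr j \<Rightarrow> (0, eta j \<omega>))
           (UNIV :: (nat + nat) set)"
    and "delta > 0"
    and "real t \<ge> 2 * real (CARD('n) + CARD('l)) * ln (1 / delta)"
  shows "measure M {\<omega> \<in> space M.
            spec_norm (\<Sum>j = 1..t. outer (eta j \<omega>) (x j \<omega>))
            \<le> sqrt (real t) * se *
               (4 * sx * sqrt (real (CARD('n) + CARD('l)) * ln (9 / delta))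
                + muhat * (sqrt (2 * real (CARD('l) + CARD('n))) + sqrt (2 * ln (2 / delta))))}
         \<ge> 1 - 2 * delta"
proof -
  interpret gaussian_pairs M x eta mu sx se
    using assms(1-3,6-8) by (intro gaussian_pairs.intro gaussian_pairs_axioms.intro)
  show ?thesis
  proof (cases "delta < 1/2")
    case True
    define B1 where "B1 = sqrt (real t) * se * (4 * sx * sqrt (real (CARD('n) + CARD('l)) * ln (9 / delta)))"
    define B2 where "B2 = sqrt (real t) * se *
      (muhat * (sqrt (2 * real (CARD('l) + CARD('n))) + sqrt (2 * ln (2 / delta))))"
    have split: "sqrt (real t) * se * (4 * sx * sqrt (real (CARD('n) + CARD('l)) * ln (9 / delta))
        + muhat * (sqrt (2 * real (CARD('l) + CARD('n))) + sqrt (2 * ln (2 / delta)))) = B1 + B2"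
      unfolding B1_def B2_def by (rule distrib_left)
    show ?thesis unfolding split
      using prob_spec_norm_sum_outer_le[where J = "{1..t}" and a = B1 and b = B2]
        prob_centered_part_large[OF assms(9) True assms(10), folded B1_def]
        prob_mean_part_large[where t = t, OF assms(5,9) True, folded B2_def]
      by linarith
  qed (simp add: order_trans[OF _ measure_nonneg])
qed

end
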